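(* Let $(G,H)$ be a discrete Hecke pair and let $\Gamma$ be a group containing $G$ as a closed finite index subgroup such that $(\Gamma,H)$ is also a discrete Hecke pair. Then $(G,H)$ has property (RD) if and only if $(\Gamma,H)$ has property (RD).
   Context: A discrete Hecke pair is a group $G$ with a subgroup $H$ such that $[H:H\cap xHx^{-1}]<\infty$ for all $x\in G$. The Hecke algebra $\mathcal H(G,H)$ consists of finitely supported right $H$-invariant functions on $H\backslash G$ with product $f*g(Hx)=\sum_{Hy\in H\backslash G}f(Hxy^{-1})g(Hy)$, and $\lambda(f)\xi=f*\xi$ on $\ell^2(H\backslash G)$. A length function on $(G,H)$ is $l:G\to[0,\infty)$ with $l(e)=0$, $l(g)=l(g^{-1})$, $l(gh)\le l(g)+l(h)$ and $l|_H=0$. $(G,H)$ has property (RD) if there exist such $l$ and $s,c>0$ with $\|\lambda(f)\|\le c\big(\sum_{Hx\in H\backslash G}|f(Hx)|^2(1+l(x))^{2s}\big)^{1/2}$ for all $f\in\mathcal H(G,H)$. *)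

theory Defs
  imports "HOL-Analysis.Analysis" "HOL-Algebra.Coset"
begin

text \<open>Everything lives inside an ambient group Gam (a HOL-Algebra group); the groups
of the Hecke pairs are subgroups K of it. Right cosets Hx are r_coset.\<close>

definition hecke_pair :: "('a, 'b) monoid_scheme \<Rightarrow> 'a set \<Rightarrow> 'a set \<Rightarrow> bool" where
  "hecke_pair Gam K H \<longleftrightarrow> subgroup K Gam \<and> subgroup H Gam \<and> H \<subseteq> K \<and>
     (\<forall>x\<in>K. finite ((\<lambda>h. (H \<inter> (\<lambda>k. x \<otimes>\<^bsub>Gam\<^esub> k \<otimes>\<^bsub>Gam\<^esub> inv\<^bsub>Gam\<^esub> x) ` H) #>\<^bsub>Gam\<^esub> h) ` H))"

definition coset_space :: "('a, 'b) monoid_scheme \<Rightarrow> 'a set \<Rightarrow> 'a set \<Rightarrow> 'a set set" where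
  "coset_space Gam K H = (\<lambda>x. H #>\<^bsub>Gam\<^esub> x) ` K"

definition rep :: "'a set \<Rightarrow> 'a" where
  "rep c = (SOME y. y \<in> c)"

definition hecke_algebra :: "('a, 'b) monoid_scheme \<Rightarrow> 'a set \<Rightarrow> 'a set \<Rightarrow> ('a set \<Rightarrow> complex) set" where
  "hecke_algebra Gam K H = {f.
     (\<forall>c. c \<notin> coset_space Gam K H \<longrightarrow> f c = 0) \<and>
     finite {c. f c \<noteq> 0} \<and>
     (\<forall>x\<in>K. \<forall>h\<in>H. f (H #>\<^bsub>Gam\<^esub> (x \<otimes>\<^bsub>Gam\<^esub> h)) = f (H #>\<^bsub>Gam\<^esub> x))}"

definition hconv :: "('a, 'b) monoid_scheme \<Rightarrow> 'a set \<Rightarrow> 'a set \<Rightarrow> ('a set \<Rightarrow> complex) \<Rightarrow> ('a set \<Rightarrow> complex) \<Rightarrow> 'a set \<Rightarrow> complex" where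
  "hconv Gam K H f xi c = (\<Sum>\<^sub>\<infinity>d\<in>coset_space Gam K H.
      f (H #>\<^bsub>Gam\<^esub> (rep c \<otimes>\<^bsub>Gam\<^esub> inv\<^bsub>Gam\<^esub> (rep d))) * xi d)"

definition in_l2 :: "'a set set \<Rightarrow> ('a set \<Rightarrow> complex) \<Rightarrow> bool" where
  "in_l2 S xi \<longleftrightarrow> (\<lambda>c. (cmod (xi c))\<^sup>2) summable_on S"

definition l2_norm :: "'a set set \<Rightarrow> ('a set \<Rightarrow> complex) \<Rightarrow> real" where
  "l2_norm S xi = sqrt (\<Sum>\<^sub>\<infinity>c\<in>S. (cmod (xi c))\<^sup>2)"

definition length_function :: "('a, 'b) monoid_scheme \<Rightarrow> 'a set \<Rightarrow> 'a set \<Rightarrow> ('a \<Rightarrow> real) \<Rightarrow> bool" where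
  "length_function Gam K H l \<longleftrightarrow>
     (\<forall>g\<in>K. l g \<ge> 0) \<and> l \<one>\<^bsub>Gam\<^esub> = 0 \<and>
     (\<forall>g\<in>K. l g = l (inv\<^bsub>Gam\<^esub> g)) \<and>
     (\<forall>g\<in>K. \<forall>h\<in>K. l (g \<otimes>\<^bsub>Gam\<^esub> h) \<le> l g + l h) \<and>
     (\<forall>h\<in>H. l h = 0)"

text \<open>Property (RD): operator norm of lambda(f) on l^2(H\K) bounded by the weighted
  l^2 norm, written out as the operator-norm inequality for all xi in l^2(H\K).\<close>
definition property_RD :: "('a, 'b) monoid_scheme \<Rightarrow> 'a set \<Rightarrow> 'a set \<Rightarrow> bool" where
  "property_RD Gam K H \<longleftrightarrow> (\<exists>l s C. length_function Gam K H l \<and> s > 0 \<and> C > 0 \<and>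
     (\<forall>f\<in>hecke_algebra Gam K H. \<forall>xi. in_l2 (coset_space Gam K H) xi \<longrightarrow>
        l2_norm (coset_space Gam K H) (hconv Gam K H f xi)
          \<le> C * sqrt (\<Sum>\<^sub>\<infinity>c\<in>coset_space Gam K H. (cmod (f c))\<^sup>2 * (1 + l (rep c)) powr (2 * s))
              * l2_norm (coset_space Gam K H) xi))"

end

theory Submission imports Defs begin

(* Restriction is immediate: square summable functions on H\K extend by zero to H\Gamma, and
   convolution with an element of the Hecke algebra of (K,H) respects this extension.
   For the converse fix a finite set R of representatives of K\Gamma containing 1. A length
   function l on K extends to Gamma by L(x) = max {l(t x t'^-1) : t, t' in R, t x t'^-1 in K},
   made bi-invariant under H. For f in the Hecke algebra of (Gamma,H) and t in R, the majorant
   f_t(Hg) = (sum over c in H\HgHtH of |f c|^2 / deg c)^(1/2) on H\K dominates Hg |-> |f(Hgt)|,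
   and its weighted l^2-norm costs only a factor deg(t^-1) (1 + L(t^-1))^s. Hence |f * xi| is
   pointwise at most the sum over t of f_t * eta_t, where eta_t pushes |xi| forward along
   Hd |-> Htd and has norm at most deg(t^-1)^(1/2) |xi|. Each f_t * eta_t is estimated by
   property (RD) of (K,H) on each of the finitely many right translates (H\K) r, r in R, which
   cover H\Gamma. *)

lemma infsum_finite_support:
  assumes "finite Z" "Z \<subseteq> A" "\<And>x. x \<in> A - Z \<Longrightarrow> g x = 0"
  shows "infsum g A = sum g Z"
proof -
  have "infsum g A = infsum g Z" by (rule infsum_cong_neutral) (use assms in auto)
  then show ?thesis using assms by simp
qed

lemma norm_sum_of_real_mult:
  fixes a :: "_ \<Rightarrow> complex"
  assumes "\<And>e. e \<in> E \<Longrightarrow> a e = complex_of_real (cmod (a e))" and "\<And>e. e \<in> E \<Longrightarrow> 0 \<le> b e"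
  shows "cmod (\<Sum>e\<in>E. a e * complex_of_real (b e)) = (\<Sum>e\<in>E. cmod (a e) * b e)"
proof -
  have "(\<Sum>e\<in>E. a e * complex_of_real (b e)) = complex_of_real (\<Sum>e\<in>E. cmod (a e) * b e)"
    unfolding of_real_sum using assms(1) by (intro sum.cong refl) (metis of_real_mult)
  moreover have "0 \<le> (\<Sum>e\<in>E. cmod (a e) * b e)" using assms(2) by (intro sum_nonneg) simp
  ultimately show ?thesis by (simp only: norm_of_real abs_of_nonneg)
qed

lemma summable_on_finite_support:
  assumes "finite Z" "\<And>x. x \<in> A - Z \<Longrightarrow> g x = 0"
  shows "g summable_on A"
  using summable_on_cong_neutral[where S = "Z \<inter> A" and T = A and f = g and g = g] assms by auto

lemma l2_norm_cong_neutral: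
  assumes "A \<subseteq> B" "\<And>c. c \<in> B - A \<Longrightarrow> g c = 0" "\<And>c. c \<in> A \<Longrightarrow> g c = h c"
  shows "l2_norm B g = l2_norm A h"
  unfolding l2_norm_def by (rule arg_cong[where f = sqrt], rule infsum_cong_neutral) (use assms in auto)

lemma in_l2_cong_neutral:
  assumes "A \<subseteq> B" "\<And>c. c \<in> B - A \<Longrightarrow> g c = 0" "\<And>c. c \<in> A \<Longrightarrow> g c = h c"
  shows "in_l2 B g \<longleftrightarrow> in_l2 A h"
  unfolding in_l2_def by (rule summable_on_cong_neutral) (use assms in auto)

lemma infsum_le_bound_nonneg:
  fixes a :: "_ \<Rightarrow> real"
  assumes "\<And>x. x \<in> A \<Longrightarrow> 0 \<le> a x" and "\<And>F. finite F \<Longrightarrow> F \<subseteq> A \<Longrightarrow> sum a F \<le> B"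
  shows "infsum a A \<le> B"
proof -
  have "bdd_above (sum a ` {F. F \<subseteq> A \<and> finite F})" using assms(2) by (intro bdd_aboveI2) auto
  then have "infsum a A = (SUP F\<in>{F. finite F \<and> F \<subseteq> A}. sum a F)"
    using assms(1) by (intro nonneg_bdd_above_infsum) (auto simp: conj_commute)
  also have "\<dots> \<le> B" by (rule cSUP_least) (use assms(2) in auto)
  finally show ?thesis .
qed

lemma sum_UN_le_sum_nonneg:
  fixes g :: "_ \<Rightarrow> real"
  assumes "finite I" "\<And>i. i \<in> I \<Longrightarrow> finite (A i)" "\<And>x. 0 \<le> g x"
  shows "sum g (\<Union>i\<in>I. A i) \<le> (\<Sum>i\<in>I. sum g (A i))"
  using assms
proof (induction I rule: finite_induct)
  case (insert i I)
  have "sum g (\<Union>j\<in>insert i I. A j) \<le> sum g (A i) + sum g (\<Union>j\<in>I. A j)"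
    using sum_Un[of "A i" "\<Union>j\<in>I. A j" g] insert by (simp add: sum_nonneg)
  then show ?case using insert by simp
qed simp

lemma length_function_nonneg: "length_function Gam K H l \<Longrightarrow> x \<in> K \<Longrightarrow> 0 \<le> l x"
  unfolding length_function_def by auto

lemma length_function_inv: "length_function Gam K H l \<Longrightarrow> x \<in> K \<Longrightarrow> l (inv\<^bsub>Gam\<^esub> x) = l x"
  unfolding length_function_def by metis

lemma length_function_mult_le:
  "length_function Gam K H l \<Longrightarrow> x \<in> K \<Longrightarrow> y \<in> K \<Longrightarrow> l (x \<otimes>\<^bsub>Gam\<^esub> y) \<le> l x + l y"
  unfolding length_function_def by metis

lemma length_function_zero: "length_function Gam K H l \<Longrightarrow> h \<in> H \<Longrightarrow> l h = 0"
  unfolding length_function_def by metis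

section \<open>Right cosets of a Hecke subgroup\<close>

locale hecke_group = group +
  fixes H :: "'a set"
  assumes H_subgroup: "subgroup H G"
    and hecke_finite: "x \<in> carrier G \<Longrightarrow> finite ((\<lambda>h. (H \<inter> (\<lambda>k. x \<otimes> k \<otimes> inv x) ` H) #> h) ` H)"
begin

lemma H_subset: "H \<subseteq> carrier G"
  by (rule subgroup.subset[OF H_subgroup])

lemma H_closed: "h \<in> H \<Longrightarrow> h \<in> carrier G"
  using H_subset by auto

lemma H_one: "\<one> \<in> H"
  by (rule subgroup.one_closed[OF H_subgroup])

lemma H_mult: "h \<in> H \<Longrightarrow> k \<in> H \<Longrightarrow> h \<otimes> k \<in> H"
  by (rule subgroup.m_closed[OF H_subgroup])

lemma H_inv: "h \<in> H \<Longrightarrow> inv h \<in> H"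
  by (rule subgroup.m_inv_closed[OF H_subgroup])

lemma mult_inv_cancel_left: "x \<in> carrier G \<Longrightarrow> y \<in> carrier G \<Longrightarrow> x \<otimes> (inv x \<otimes> y) = y"
  by (simp add: m_assoc[symmetric])

lemma inv_mult_cancel_left: "x \<in> carrier G \<Longrightarrow> y \<in> carrier G \<Longrightarrow> inv x \<otimes> (x \<otimes> y) = y"
  by (simp add: m_assoc[symmetric])

lemma rcos_eq_iff:
  assumes "x \<in> carrier G" "y \<in> carrier G"
  shows "H #> x = H #> y \<longleftrightarrow> x \<otimes> inv y \<in> H"
  using assms rcos_self[OF _ H_subgroup] repr_independence[OF _ _ H_subgroup]
    subgroup.rcos_module[OF H_subgroup is_group] by metis

lemma rcos_mult_left: "h \<in> H \<Longrightarrow> x \<in> carrier G \<Longrightarrow> H #> (h \<otimes> x) = H #> x"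
  by (subst rcos_eq_iff) (auto simp: m_assoc H_closed)

lemma rcos_assoc: "x \<in> carrier G \<Longrightarrow> y \<in> carrier G \<Longrightarrow> (H #> x) #> y = H #> (x \<otimes> y)"
  using coset_mult_assoc[OF H_subset] by simp

lemma rep_rcosE:
  assumes "x \<in> carrier G"
  obtains h where "h \<in> H" "rep (H #> x) = h \<otimes> x"
proof -
  have "rep (H #> x) \<in> H #> x"
    unfolding rep_def using rcos_self[OF assms H_subgroup] by (rule someI)
  then show ?thesis using that unfolding r_coset_def by blast
qed

lemma rep_rcos_closed: "x \<in> carrier G \<Longrightarrow> rep (H #> x) \<in> carrier G"
  by (metis rep_rcosE H_closed m_closed)

lemma rcos_rep_rcos: "x \<in> carrier G \<Longrightarrow> H #> rep (H #> x) = H #> x"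
  by (metis rep_rcosE rcos_mult_left)

text \<open>\<open>dcosets x\<close> is \<open>H\<backslash>HxH\<close> and \<open>dcosets2 x y\<close> is \<open>H\<backslash>HxHyH\<close>.\<close>

definition dcosets :: "'a \<Rightarrow> 'a set set" where
  "dcosets x = (\<lambda>h. H #> (x \<otimes> h)) ` H"

definition dcos_deg :: "'a \<Rightarrow> nat" where
  "dcos_deg x = card (dcosets x)"

definition dcosets2 :: "'a \<Rightarrow> 'a \<Rightarrow> 'a set set" where
  "dcosets2 x y = (\<lambda>(h, h'). H #> (x \<otimes> h \<otimes> y \<otimes> h')) ` (H \<times> H)"

text \<open>\<open>H x h\<close> only depends on the coset of \<open>h\<close> modulo \<open>H \<inter> x\<inverse>Hx\<close>, of which there
  are finitely many by the Hecke condition for \<open>x\<inverse>\<close>.\<close>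

lemma finite_dcosets:
  assumes x: "x \<in> carrier G"
  shows "finite (dcosets x)"
proof -
  define J where "J = H \<inter> (\<lambda>k. inv x \<otimes> k \<otimes> inv (inv x)) ` H"
  define pick where "pick C = H #> (x \<otimes> (SOME h. h \<in> C))" for C
  have "dcosets x \<subseteq> pick ` ((\<lambda>h. J #> h) ` H)"
  proof
    fix c assume "c \<in> dcosets x"
    then obtain h where h: "h \<in> H" "c = H #> (x \<otimes> h)" unfolding dcosets_def by auto
    have "\<one> \<in> J" unfolding J_def using H_one x by (auto intro!: image_eqI[of _ _ "\<one>"])
    then have "h \<in> J #> h" unfolding r_coset_def using h H_closed by force
    then have "(SOME h'. h' \<in> J #> h) \<in> J #> h" by (rule someI)
    then obtain j where j: "j \<in> J" "(SOME h'. h' \<in> J #> h) = j \<otimes> h" unfolding r_coset_def by auto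
    then obtain k where k: "k \<in> H" "j = inv x \<otimes> k \<otimes> x" unfolding J_def using x by auto
    have "x \<otimes> (j \<otimes> h) = k \<otimes> (x \<otimes> h)"
      using k x h H_closed by (simp add: m_assoc mult_inv_cancel_left)
    then have "pick (J #> h) = c" unfolding pick_def using j h k rcos_mult_left H_closed x by simp
    then show "c \<in> pick ` ((\<lambda>h. J #> h) ` H)" using h by blast
  qed
  moreover have "finite ((\<lambda>h. J #> h) ` H)" unfolding J_def using hecke_finite[of "inv x"] x by simp
  ultimately show ?thesis using finite_subset by blast
qed

lemma dcos_deg_pos: "x \<in> carrier G \<Longrightarrow> dcos_deg x > 0"
  unfolding dcos_deg_def using finite_dcosets[of x] H_one unfolding dcosets_def
  by (auto simp: card_gt_0_iff)

lemma dcosets_bi_invariant: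
  assumes "x \<in> carrier G" "k \<in> H" "h \<in> H"
  shows "dcosets (k \<otimes> x \<otimes> h) = dcosets x"
proof -
  have "H #> (k \<otimes> x \<otimes> h \<otimes> h') = H #> (x \<otimes> (h \<otimes> h'))" if "h' \<in> H" for h'
    using assms that H_closed rcos_mult_left by (simp add: m_assoc)
  moreover have "H #> (x \<otimes> h') = H #> (k \<otimes> x \<otimes> h \<otimes> (inv h \<otimes> h'))" if "h' \<in> H" for h'
    using assms that H_closed rcos_mult_left by (simp add: m_assoc mult_inv_cancel_left)
  ultimately show ?thesis unfolding dcosets_def
    using assms H_mult H_inv by (auto simp: image_def)
qed

lemma dcos_deg_bi_invariant:
  "x \<in> carrier G \<Longrightarrow> k \<in> H \<Longrightarrow> h \<in> H \<Longrightarrow> dcos_deg (k \<otimes> x \<otimes> h) = dcos_deg x"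
  unfolding dcos_deg_def using dcosets_bi_invariant by simp

lemma dcosets2_subset:
  assumes x: "x \<in> carrier G" and y: "y \<in> carrier G"
  shows "dcosets2 x y \<subseteq> (\<Union>C\<in>dcosets y. (\<lambda>c. c #> rep C) ` dcosets x)"
proof
  fix c assume "c \<in> dcosets2 x y"
  then obtain h h' where hh: "h \<in> H" "h' \<in> H" "c = H #> (x \<otimes> h \<otimes> y \<otimes> h')"
    unfolding dcosets2_def by auto
  define C where "C = H #> (y \<otimes> h')"
  have C: "C \<in> dcosets y" unfolding C_def dcosets_def using hh by auto
  obtain k where k: "k \<in> H" "rep C = k \<otimes> (y \<otimes> h')"
    unfolding C_def using rep_rcosE[of "y \<otimes> h'"] y hh H_closed by auto
  have "x \<otimes> h \<otimes> y \<otimes> h' = (x \<otimes> (h \<otimes> inv k)) \<otimes> rep C"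
    using k hh x y H_closed by (simp add: m_assoc inv_mult_cancel_left)
  then have "c = (H #> (x \<otimes> (h \<otimes> inv k))) #> rep C"
    using hh rcos_assoc k x y H_closed H_inv by (simp add: rep_rcos_closed[of "y \<otimes> h'", folded C_def])
  moreover have "H #> (x \<otimes> (h \<otimes> inv k)) \<in> dcosets x"
    unfolding dcosets_def using hh k H_mult H_inv by auto
  ultimately show "c \<in> (\<Union>C\<in>dcosets y. (\<lambda>c. c #> rep C) ` dcosets x)" using C by blast
qed

lemma finite_dcosets2: "x \<in> carrier G \<Longrightarrow> y \<in> carrier G \<Longrightarrow> finite (dcosets2 x y)"
  using dcosets2_subset finite_dcosets by (meson finite_UN_I finite_imageI finite_subset)

lemma card_dcosets2_le:
  assumes x: "x \<in> carrier G" and y: "y \<in> carrier G"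
  shows "card (dcosets2 x y) \<le> dcos_deg x * dcos_deg y"
proof -
  have "card (dcosets2 x y) \<le> card (\<Union>C\<in>dcosets y. (\<lambda>c. c #> rep C) ` dcosets x)"
    using dcosets2_subset[OF x y] finite_dcosets x y by (intro card_mono) auto
  also have "\<dots> \<le> (\<Sum>C\<in>dcosets y. card ((\<lambda>c. c #> rep C) ` dcosets x))"
    by (rule card_UN_le) (use finite_dcosets y in auto)
  also have "\<dots> \<le> (\<Sum>C\<in>dcosets y. dcos_deg x)"
    unfolding dcos_deg_def by (intro sum_mono card_image_le finite_dcosets x)
  also have "\<dots> = dcos_deg x * dcos_deg y" unfolding dcos_deg_def by simp
  finally show ?thesis .
qed

lemma dcosets2_bi_invariant:
  assumes "x \<in> carrier G" "k \<in> H" "h \<in> H" "y \<in> carrier G"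
  shows "dcosets2 (k \<otimes> x \<otimes> h) y = dcosets2 x y"
proof -
  have shift: "H #> (k \<otimes> x \<otimes> h \<otimes> h1 \<otimes> y \<otimes> h2) = H #> (x \<otimes> (h \<otimes> h1) \<otimes> y \<otimes> h2)"
    if "h1 \<in> H" "h2 \<in> H" for h1 h2
  proof -
    have "k \<otimes> x \<otimes> h \<otimes> h1 \<otimes> y \<otimes> h2 = k \<otimes> (x \<otimes> (h \<otimes> h1) \<otimes> y \<otimes> h2)"
      using assms that H_closed by (simp add: m_assoc)
    then show ?thesis using rcos_mult_left assms that H_closed by simp
  qed
  have unshift: "H #> (x \<otimes> h1 \<otimes> y \<otimes> h2) = H #> (k \<otimes> x \<otimes> h \<otimes> (inv h \<otimes> h1) \<otimes> y \<otimes> h2)"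
    if "h1 \<in> H" "h2 \<in> H" for h1 h2
  proof -
    have "h \<otimes> (inv h \<otimes> h1) = h1" using assms that H_closed by (simp add: mult_inv_cancel_left)
    then show ?thesis using shift[of "inv h \<otimes> h1" h2] that H_mult H_inv assms by simp
  qed
  show ?thesis
  proof (rule Set.set_eqI, rule iffI)
    fix c assume "c \<in> dcosets2 (k \<otimes> x \<otimes> h) y"
    then obtain h1 h2 where "h1 \<in> H" "h2 \<in> H" "c = H #> (k \<otimes> x \<otimes> h \<otimes> h1 \<otimes> y \<otimes> h2)"
      unfolding dcosets2_def by auto
    then show "c \<in> dcosets2 x y" unfolding dcosets2_def using shift assms H_mult
      by (auto intro!: image_eqI[of _ _ "(h \<otimes> h1, h2)"])
  next
    fix c assume "c \<in> dcosets2 x y"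
    then obtain h1 h2 where "h1 \<in> H" "h2 \<in> H" "c = H #> (x \<otimes> h1 \<otimes> y \<otimes> h2)"
      unfolding dcosets2_def by auto
    then show "c \<in> dcosets2 (k \<otimes> x \<otimes> h) y" unfolding dcosets2_def using unshift assms H_mult H_inv
      by (auto intro!: image_eqI[of _ _ "(inv h \<otimes> h1, h2)"])
  qed
qed

lemma dcosets2_rep: "x \<in> carrier G \<Longrightarrow> y \<in> carrier G \<Longrightarrow> dcosets2 (rep (H #> x)) y = dcosets2 x y"
  by (metis rep_rcosE dcosets2_bi_invariant[of x _ \<one> y] H_one H_closed r_one m_closed)

lemma dcosets2_mult_right:
  "x \<in> carrier G \<Longrightarrow> h \<in> H \<Longrightarrow> y \<in> carrier G \<Longrightarrow> dcosets2 (x \<otimes> h) y = dcosets2 x y"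
  using dcosets2_bi_invariant[of x \<one> h y] H_one by simp

lemma dcosets2_swap:
  assumes g: "g \<in> carrier G" and t: "t \<in> carrier G" and c: "c \<in> dcosets2 g t"
  shows "H #> g \<in> dcosets2 (rep c) (inv t)"
proof -
  obtain h1 h2 where hh: "h1 \<in> H" "h2 \<in> H" "c = H #> (g \<otimes> h1 \<otimes> t \<otimes> h2)"
    using c unfolding dcosets2_def by auto
  obtain k where k: "k \<in> H" "rep c = k \<otimes> (g \<otimes> h1 \<otimes> t \<otimes> h2)"
    using rep_rcosE[of "g \<otimes> h1 \<otimes> t \<otimes> h2"] hh g t H_closed by auto
  have "rep c \<otimes> inv h2 \<otimes> inv t \<otimes> inv h1 = k \<otimes> g"
    using k hh g t H_closed by (simp add: m_assoc)
  then have "H #> g = H #> (rep c \<otimes> inv h2 \<otimes> inv t \<otimes> inv h1)" using rcos_mult_left k g by simp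
  then show ?thesis unfolding dcosets2_def using hh H_inv by auto
qed

lemma dcosets_subset_dcosets2: "g \<in> carrier G \<Longrightarrow> t \<in> carrier G \<Longrightarrow> dcosets (g \<otimes> t) \<subseteq> dcosets2 g t"
  unfolding dcosets_def dcosets2_def using H_one
  by (force simp: m_assoc intro!: image_eqI[of _ _ "(\<one>, _)"])

lemma length_function_double_coset_le:
  assumes L: "length_function G (carrier G) H L"
    and x: "x \<in> carrier G" and y: "y \<in> carrier G" and hs: "k \<in> H" "h \<in> H" "h' \<in> H"
  shows "L (k \<otimes> x \<otimes> h \<otimes> y \<otimes> h') \<le> L x + L y"
proof -
  have sub: "\<And>a b. a \<in> carrier G \<Longrightarrow> b \<in> carrier G \<Longrightarrow> L (a \<otimes> b) \<le> L a + L b"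
    and zero: "\<And>a. a \<in> H \<Longrightarrow> L a = 0"
    using L unfolding length_function_def by metis+
  have c: "k \<in> carrier G" "h \<in> carrier G" "h' \<in> carrier G" using hs H_closed by auto
  have "L (k \<otimes> x \<otimes> h \<otimes> y \<otimes> h') \<le> L (k \<otimes> x \<otimes> h \<otimes> y) + L h'" using sub c x y by simp
  also have "\<dots> \<le> L (k \<otimes> x \<otimes> h) + L y + L h'" using sub[of "k \<otimes> x \<otimes> h" y] c x y by simp
  also have "\<dots> \<le> L (k \<otimes> x) + L h + L y + L h'" using sub[of "k \<otimes> x" h] c x y by simp
  also have "\<dots> \<le> L k + L x + L h + L y + L h'" using sub[of k x] c x y by simp
  also have "\<dots> = L x + L y" using zero hs by simp
  finally show ?thesis .
qed

end

locale hecke_chain = hecke_group +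
  fixes K :: "'a set"
  assumes K_subgroup: "subgroup K G"
    and H_subset_K: "H \<subseteq> K"
begin

lemma K_closed: "x \<in> K \<Longrightarrow> x \<in> carrier G"
  using subgroup.subset[OF K_subgroup] by auto

lemma K_mult: "x \<in> K \<Longrightarrow> y \<in> K \<Longrightarrow> x \<otimes> y \<in> K"
  by (rule subgroup.m_closed[OF K_subgroup])

lemma K_inv: "x \<in> K \<Longrightarrow> inv x \<in> K"
  by (rule subgroup.m_inv_closed[OF K_subgroup])

lemma rcos_in_coset_space: "x \<in> K \<Longrightarrow> H #> x \<in> coset_space G K H"
  unfolding coset_space_def by auto

lemma coset_spaceE:
  assumes "c \<in> coset_space G K H"
  obtains x where "x \<in> K" "c = H #> x"
  using assms unfolding coset_space_def by auto

lemma rep_in_K: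
  assumes "c \<in> coset_space G K H"
  shows "rep c \<in> K"
proof -
  obtain x where x: "x \<in> K" "c = H #> x" using assms by (rule coset_spaceE)
  obtain h where "h \<in> H" "rep (H #> x) = h \<otimes> x" using rep_rcosE[of x] x K_closed by auto
  then show ?thesis using x H_subset_K K_mult by auto
qed

lemma rep_closed: "c \<in> coset_space G K H \<Longrightarrow> rep c \<in> carrier G"
  by (rule K_closed[OF rep_in_K])

lemma rcos_rep: "c \<in> coset_space G K H \<Longrightarrow> H #> rep c = c"
  by (erule coset_spaceE) (simp add: rcos_rep_rcos K_closed)

lemma in_K_if_rcos_in_coset_space:
  assumes "x \<in> carrier G" "H #> x \<in> coset_space G K H"
  shows "x \<in> K"
proof -
  obtain y where y: "y \<in> K" "H #> x = H #> y" using assms(2) by (rule coset_spaceE)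
  then have "x \<otimes> inv y \<in> H" using rcos_eq_iff assms K_closed by auto
  then have "(x \<otimes> inv y) \<otimes> y \<in> K" using H_subset_K y K_mult by auto
  then show ?thesis using assms y K_closed by (simp add: m_assoc)
qed

lemma hecke_algebra_zero: "f \<in> hecke_algebra G K H \<Longrightarrow> c \<notin> coset_space G K H \<Longrightarrow> f c = 0"
  unfolding hecke_algebra_def by auto

lemma hecke_algebra_finite_support: "f \<in> hecke_algebra G K H \<Longrightarrow> finite {c. f c \<noteq> 0}"
  unfolding hecke_algebra_def by auto

lemma hecke_algebra_support: "f \<in> hecke_algebra G K H \<Longrightarrow> {c. f c \<noteq> 0} \<subseteq> coset_space G K H"
  unfolding hecke_algebra_def by auto

lemma hecke_algebra_bi_invariant:
  assumes f: "f \<in> hecke_algebra G K H" and a: "a \<in> K" and hk: "k \<in> H" "h \<in> H"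
  shows "f (H #> (k \<otimes> a \<otimes> h)) = f (H #> a)"
proof -
  have "H #> (k \<otimes> a \<otimes> h) = H #> (a \<otimes> h)"
    using rcos_mult_left[of k "a \<otimes> h"] hk a K_closed H_closed by (simp add: m_assoc)
  also have "f \<dots> = f (H #> a)" using f a hk unfolding hecke_algebra_def by auto
  finally show ?thesis by simp
qed

lemma finite_row_support:
  assumes f: "f \<in> hecke_algebra G K H" and x: "x \<in> carrier G"
  shows "finite {d \<in> coset_space G K H. f (H #> (x \<otimes> inv (rep d))) \<noteq> 0}"
proof -
  have "{d \<in> coset_space G K H. f (H #> (x \<otimes> inv (rep d))) \<noteq> 0}
     \<subseteq> (\<Union>e\<in>{c. f c \<noteq> 0}. (\<lambda>c. c #> x) ` dcosets (inv (rep e)))"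
  proof safe
    fix d assume d: "d \<in> coset_space G K H" and nz: "f (H #> (x \<otimes> inv (rep d))) \<noteq> 0"
    define e where "e = H #> (x \<otimes> inv (rep d))"
    have rd: "rep d \<in> carrier G" "H #> rep d = d" using rep_closed rcos_rep d by auto
    have e: "e \<in> coset_space G K H" using nz hecke_algebra_support[OF f] e_def by auto
    obtain k where k: "k \<in> H" "rep e = k \<otimes> (x \<otimes> inv (rep d))"
      unfolding e_def using rep_rcosE[of "x \<otimes> inv (rep d)"] x rd by auto
    have "inv (rep e) \<otimes> k \<otimes> x = rep d"
      using k x rd H_closed by (simp add: m_assoc inv_mult_group inv_mult_cancel_left)
    then have "d = (H #> (inv (rep e) \<otimes> k)) #> x"
      using rcos_assoc[of "inv (rep e) \<otimes> k" x] rd k x H_closed rep_closed[OF e] by simp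
    moreover have "H #> (inv (rep e) \<otimes> k) \<in> dcosets (inv (rep e))"
      unfolding dcosets_def using k by auto
    ultimately show "d \<in> (\<Union>e\<in>{c. f c \<noteq> 0}. (\<lambda>c. c #> x) ` dcosets (inv (rep e)))"
      using nz e_def by (intro UN_I[of e]) auto
  qed
  moreover have "finite (\<Union>e\<in>{c. f c \<noteq> 0}. (\<lambda>c. c #> x) ` dcosets (inv (rep e)))"
    using hecke_algebra_finite_support[OF f] hecke_algebra_support[OF f] rep_closed finite_dcosets
    by (intro finite_UN_I finite_imageI) auto
  ultimately show ?thesis by (rule finite_subset)
qed

lemma finite_column_support:
  assumes f: "f \<in> hecke_algebra G K H" and y: "y \<in> carrier G"
  shows "finite {c \<in> coset_space G K H. f (H #> (rep c \<otimes> y)) \<noteq> 0}"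
proof -
  have "{c \<in> coset_space G K H. f (H #> (rep c \<otimes> y)) \<noteq> 0}
     \<subseteq> (\<lambda>e. H #> (rep e \<otimes> inv y)) ` {c. f c \<noteq> 0}"
  proof safe
    fix c assume c: "c \<in> coset_space G K H" and nz: "f (H #> (rep c \<otimes> y)) \<noteq> 0"
    define e where "e = H #> (rep c \<otimes> y)"
    have rc: "rep c \<in> carrier G" "H #> rep c = c" using rep_closed rcos_rep c by auto
    obtain k where k: "k \<in> H" "rep e = k \<otimes> (rep c \<otimes> y)"
      unfolding e_def using rep_rcosE[of "rep c \<otimes> y"] y rc by auto
    have "rep e \<otimes> inv y = k \<otimes> rep c" using k y rc H_closed by (simp add: m_assoc)
    then have "H #> (rep e \<otimes> inv y) = c" using rcos_mult_left[of k "rep c"] k rc by simp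
    then show "c \<in> (\<lambda>e. H #> (rep e \<otimes> inv y)) ` {c. f c \<noteq> 0}"
      using nz e_def by (intro image_eqI[of _ _ e]) auto
  qed
  then show ?thesis by (rule finite_subset[OF _ finite_imageI[OF hecke_algebra_finite_support[OF f]]])
qed

end

sublocale hecke_group \<subseteq> whole: hecke_chain G H "carrier G"
  using H_subset by unfold_locales (auto intro: subgroup_self)

section \<open>Property (RD) passes to intermediate subgroups\<close>

definition RD_inequality ::
  "('a, 'b) monoid_scheme \<Rightarrow> 'a set \<Rightarrow> 'a set \<Rightarrow> ('a \<Rightarrow> real) \<Rightarrow> real \<Rightarrow> real \<Rightarrow> bool" where
  "RD_inequality Gam K H l s C \<longleftrightarrow> (\<forall>f\<in>hecke_algebra Gam K H. \<forall>xi. in_l2 (coset_space Gam K H) xi \<longrightarrow>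
     l2_norm (coset_space Gam K H) (hconv Gam K H f xi)
       \<le> C * sqrt (\<Sum>\<^sub>\<infinity>c\<in>coset_space Gam K H. (cmod (f c))\<^sup>2 * (1 + l (rep c)) powr (2 * s))
           * l2_norm (coset_space Gam K H) xi)"

lemma property_RD_iff:
  "property_RD Gam K H \<longleftrightarrow>
    (\<exists>l s C. length_function Gam K H l \<and> s > 0 \<and> C > 0 \<and> RD_inequality Gam K H l s C)"
  unfolding property_RD_def RD_inequality_def ..

context hecke_chain
begin

lemma coset_space_subset: "coset_space G K H \<subseteq> coset_space G (carrier G) H"
  unfolding coset_space_def using K_closed by auto

lemma hecke_algebra_subset: "hecke_algebra G K H \<subseteq> hecke_algebra G (carrier G) H"
proof
  fix f assume f: "f \<in> hecke_algebra G K H"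
  have "f (H #> (x \<otimes> h)) = f (H #> x)" if x: "x \<in> carrier G" and h: "h \<in> H" for x h
  proof (cases "x \<in> K")
    case True
    then show ?thesis using f h unfolding hecke_algebra_def by auto
  next
    case False
    have "x \<otimes> h \<notin> K"
    proof
      assume "x \<otimes> h \<in> K"
      then have "(x \<otimes> h) \<otimes> inv h \<in> K" using h H_subset_K K_mult K_inv by auto
      then show False using False x h H_closed by (simp add: m_assoc)
    qed
    then have "H #> (x \<otimes> h) \<notin> coset_space G K H" "H #> x \<notin> coset_space G K H"
      using in_K_if_rcos_in_coset_space False x h H_closed by auto
    then show ?thesis using hecke_algebra_zero[OF f] by simp
  qed
  then show "f \<in> hecke_algebra G (carrier G) H"
    using f coset_space_subset unfolding hecke_algebra_def by auto
qed

lemma length_function_restrict: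
  "length_function G (carrier G) H l \<Longrightarrow> length_function G K H l"
  using K_closed unfolding length_function_def by meson

lemma hconv_extend_by_zero:
  fixes xi :: "'a set \<Rightarrow> complex"
  assumes f: "f \<in> hecke_algebra G K H" and c: "c \<in> coset_space G (carrier G) H"
  defines "xi' \<equiv> \<lambda>d. if d \<in> coset_space G K H then xi d else 0"
  shows "hconv G (carrier G) H f xi' c =
    (if c \<in> coset_space G K H then hconv G K H f xi c else 0)"
proof (cases "c \<in> coset_space G K H")
  case True
  then show ?thesis
    unfolding hconv_def xi'_def by (simp, intro infsum_cong_neutral) (use coset_space_subset in auto)
next
  case False
  have rc: "rep c \<in> carrier G" "rep c \<notin> K"
    using False c whole.rep_closed whole.rcos_rep rcos_in_coset_space by metis+
  have "f (H #> (rep c \<otimes> inv (rep d))) * xi' d = 0" for d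
  proof (cases "d \<in> coset_space G K H")
    case True
    have rd: "rep d \<in> K" "rep d \<in> carrier G" using rep_in_K[OF True] rep_closed[OF True] .
    have "rep c \<otimes> inv (rep d) \<notin> K"
    proof
      assume "rep c \<otimes> inv (rep d) \<in> K"
      then have "(rep c \<otimes> inv (rep d)) \<otimes> rep d \<in> K" using rd K_mult by auto
      then show False using rc rd by (simp add: m_assoc)
    qed
    then have "H #> (rep c \<otimes> inv (rep d)) \<notin> coset_space G K H"
      using in_K_if_rcos_in_coset_space rc rd by auto
    then show ?thesis using hecke_algebra_zero[OF f] by simp
  qed (simp add: xi'_def)
  with False show ?thesis unfolding hconv_def by (simp add: infsum_0)
qed

lemma RD_inequality_restrict:
  assumes RD: "RD_inequality G (carrier G) H l s C"
  shows "RD_inequality G K H l s C"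
  unfolding RD_inequality_def
proof (intro ballI allI impI)
  let ?SK = "coset_space G K H" and ?SG = "coset_space G (carrier G) H"
  fix f xi assume f: "f \<in> hecke_algebra G K H" and xi: "in_l2 ?SK xi"
  define xi' where "xi' = (\<lambda>d. if d \<in> ?SK then xi d else 0)"
  have xi': "in_l2 ?SG xi'" and "l2_norm ?SG xi' = l2_norm ?SK xi"
    using xi in_l2_cong_neutral[OF coset_space_subset] l2_norm_cong_neutral[OF coset_space_subset]
    by (auto simp: xi'_def)
  moreover have "l2_norm ?SG (hconv G (carrier G) H f xi') = l2_norm ?SK (hconv G K H f xi)"
    by (rule l2_norm_cong_neutral[OF coset_space_subset])
      (use hconv_extend_by_zero[OF f] coset_space_subset in \<open>auto simp: xi'_def\<close>)
  moreover have "(\<Sum>\<^sub>\<infinity>c\<in>?SG. (cmod (f c))\<^sup>2 * (1 + l (rep c)) powr (2 * s))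
      = (\<Sum>\<^sub>\<infinity>c\<in>?SK. (cmod (f c))\<^sup>2 * (1 + l (rep c)) powr (2 * s))"
    by (rule infsum_cong_neutral) (use coset_space_subset hecke_algebra_zero[OF f] in auto)
  ultimately show "l2_norm ?SK (hconv G K H f xi)
      \<le> C * sqrt (\<Sum>\<^sub>\<infinity>c\<in>?SK. (cmod (f c))\<^sup>2 * (1 + l (rep c)) powr (2 * s)) * l2_norm ?SK xi"
    using RD[unfolded RD_inequality_def, rule_format, OF subsetD[OF hecke_algebra_subset f] xi'] by simp
qed

lemma property_RD_restrict: "property_RD G (carrier G) H \<Longrightarrow> property_RD G K H"
  using length_function_restrict RD_inequality_restrict unfolding property_RD_iff by blast

end

section \<open>Extending a length function from a finite index subgroup\<close>

lemma (in group) finite_index_transversal: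
  assumes K: "subgroup K G" and fin: "finite ((\<lambda>x. K #> x) ` carrier G)"
  obtains R where "finite R" "R \<subseteq> carrier G" "\<one> \<in> R" "\<And>x. x \<in> carrier G \<Longrightarrow> \<exists>r\<in>R. x \<otimes> inv r \<in> K"
proof
  define R where "R = insert \<one> ((\<lambda>A. SOME y. y \<in> A) ` ((\<lambda>x. K #> x) ` carrier G))"
  have pick: "(SOME y. y \<in> K #> x) \<in> K #> x" if "x \<in> carrier G" for x
    using rcos_self[OF that K] by (rule someI)
  show "finite R" "\<one> \<in> R" unfolding R_def using fin by auto
  show "R \<subseteq> carrier G"
    unfolding R_def using pick r_coset_subset_G[OF subgroup.subset[OF K]] by auto
  fix x assume x: "x \<in> carrier G"
  define r where "r = (SOME y. y \<in> K #> x)"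
  have r: "r \<in> K #> x" "r \<in> R" unfolding r_def R_def using pick[OF x] x by auto
  have rc: "r \<in> carrier G" using r r_coset_subset_G[OF subgroup.subset[OF K] x] by auto
  have "inv (r \<otimes> inv x) \<in> K"
    using subgroup.rcos_module_imp[OF K is_group x r(1)] by (rule subgroup.m_inv_closed[OF K])
  then have "x \<otimes> inv r \<in> K" using rc x by (simp add: inv_mult_group)
  then show "\<exists>r\<in>R. x \<otimes> inv r \<in> K" using r by auto
qed

text \<open>The Hecke condition for \<open>t\<inverse>\<close> makes \<open>t h t'\<inverse>\<close> (\<open>h \<in> H\<close>) range over finitely
  many \<open>H\<close>-orbits under left multiplication, on which \<open>l\<close> is constant.\<close>

lemma (in hecke_chain) length_bounded_on_translates:
  assumes l: "length_function G K H l" and t: "t \<in> carrier G" and t': "t' \<in> carrier G"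
  shows "\<exists>b. \<forall>h\<in>H. t \<otimes> h \<otimes> inv t' \<in> K \<longrightarrow> l (t \<otimes> h \<otimes> inv t') \<le> b"
proof -
  define J where "J = H \<inter> (\<lambda>k. inv t \<otimes> k \<otimes> inv (inv t)) ` H"
  define Q where "Q = (\<lambda>h. J #> h) ` H"
  have finQ: "finite Q" unfolding Q_def J_def using hecke_finite[of "inv t"] t by simp
  define m where "m C = (SOME y. y \<in> C)" for C :: "'a set"
  define b where "b = Max (insert 0 ((\<lambda>C. l (t \<otimes> m C \<otimes> inv t')) ` {C\<in>Q. t \<otimes> m C \<otimes> inv t' \<in> K}))"
  have "l (t \<otimes> h \<otimes> inv t') \<le> b" if h: "h \<in> H" and hK: "t \<otimes> h \<otimes> inv t' \<in> K" for h
  proof -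
    have "\<one> \<in> J" unfolding J_def using H_one t by (auto intro!: image_eqI[of _ _ "\<one>"])
    then have "h \<in> J #> h" unfolding r_coset_def using h H_closed by force
    then have "m (J #> h) \<in> J #> h" unfolding m_def by (rule someI)
    then obtain j where j: "j \<in> J" "m (J #> h) = j \<otimes> h" unfolding r_coset_def by auto
    then obtain k where k: "k \<in> H" "j = inv t \<otimes> k \<otimes> t" unfolding J_def using t by auto
    have eq: "t \<otimes> m (J #> h) \<otimes> inv t' = k \<otimes> (t \<otimes> h \<otimes> inv t')"
      using j k t t' h H_closed by (simp add: m_assoc mult_inv_cancel_left)
    have inK: "t \<otimes> m (J #> h) \<otimes> inv t' \<in> K" unfolding eq using k H_subset_K hK K_mult by auto
    have "t \<otimes> h \<otimes> inv t' = inv k \<otimes> (t \<otimes> m (J #> h) \<otimes> inv t')"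
      unfolding eq using k t t' h H_closed by (simp add: inv_mult_cancel_left)
    then have "l (t \<otimes> h \<otimes> inv t') \<le> l (inv k) + l (t \<otimes> m (J #> h) \<otimes> inv t')"
      using length_function_mult_le[OF l, of "inv k"] inK k H_subset_K H_inv by auto
    also have "\<dots> = l (t \<otimes> m (J #> h) \<otimes> inv t')"
      using length_function_zero[OF l, of "inv k"] k H_inv by simp
    also have "\<dots> \<le> b" unfolding b_def using h inK finQ by (intro Max_ge) (auto simp: Q_def)
    finally show ?thesis .
  qed
  then show ?thesis by blast
qed

locale hecke_transversal = hecke_chain +
  fixes R :: "'a set"
  assumes finite_R: "finite R"
    and R_subset: "R \<subseteq> carrier G"
    and one_in_R: "\<one> \<in> R"
    and R_covers: "x \<in> carrier G \<Longrightarrow> \<exists>r\<in>R. x \<otimes> inv r \<in> K"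
begin

lemma R_closed: "r \<in> R \<Longrightarrow> r \<in> carrier G"
  using R_subset by auto

text \<open>\<open>conj_length l\<close> extends \<open>l\<close> to a subadditive symmetric function on \<open>G\<close>, which is
  bounded on \<open>H\<close>; \<open>extended_length l\<close> then makes it \<open>H\<close>-bi-invariant and zero on \<open>H\<close>.\<close>

definition conj_length :: "('a \<Rightarrow> real) \<Rightarrow> 'a \<Rightarrow> real" where
  "conj_length l x =
     Max ((\<lambda>(t, t'). l (t \<otimes> x \<otimes> inv t')) ` {(t, t'). t \<in> R \<and> t' \<in> R \<and> t \<otimes> x \<otimes> inv t' \<in> K})"

definition bi_length :: "('a \<Rightarrow> real) \<Rightarrow> 'a \<Rightarrow> real" where
  "bi_length l x = (SUP p\<in>H \<times> H. conj_length l (fst p \<otimes> x \<otimes> snd p))"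

definition extended_length :: "('a \<Rightarrow> real) \<Rightarrow> 'a \<Rightarrow> real" where
  "extended_length l x = (if x \<in> H then 0 else bi_length l x)"

lemma finite_transversal_pairs: "finite {(t, t'). t \<in> R \<and> t' \<in> R \<and> t \<otimes> x \<otimes> inv t' \<in> K}"
  by (rule finite_subset[of _ "R \<times> R"]) (auto simp: finite_R)

context
  fixes l :: "'a \<Rightarrow> real"
  assumes l: "length_function G K H l"
begin

lemma conj_length_ge:
  assumes x: "x \<in> carrier G" and t: "t \<in> R" "t' \<in> R" "t \<otimes> x \<otimes> inv t' \<in> K"
  shows "l (t \<otimes> x \<otimes> inv t') \<le> conj_length l x"
proof -
  show ?thesis unfolding conj_length_def using t finite_transversal_pairs by (intro Max_ge) auto
qed

lemma conj_length_le:
  assumes x: "x \<in> carrier G"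
    and bound: "\<And>t t'. t \<in> R \<Longrightarrow> t' \<in> R \<Longrightarrow> t \<otimes> x \<otimes> inv t' \<in> K \<Longrightarrow> l (t \<otimes> x \<otimes> inv t') \<le> B"
  shows "conj_length l x \<le> B"
proof -
  obtain r where "r \<in> R" "x \<otimes> inv r \<in> K" using R_covers x by auto
  then have "(\<one>, r) \<in> {(t, t'). t \<in> R \<and> t' \<in> R \<and> t \<otimes> x \<otimes> inv t' \<in> K}" using one_in_R x by simp
  then show ?thesis unfolding conj_length_def using bound finite_transversal_pairs by (subst Max_le_iff) auto
qed

lemma length_le_conj_length: "x \<in> K \<Longrightarrow> l x \<le> conj_length l x"
  using conj_length_ge[of x \<one> \<one>] one_in_R K_closed by simp

lemma conj_length_nonneg:
  assumes x: "x \<in> carrier G"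
  shows "0 \<le> conj_length l x"
proof -
  obtain r where r: "r \<in> R" "x \<otimes> inv r \<in> K" using R_covers x by auto
  then have "l (\<one> \<otimes> x \<otimes> inv r) \<le> conj_length l x" using conj_length_ge[OF x one_in_R r(1)] x by simp
  moreover have "0 \<le> l (\<one> \<otimes> x \<otimes> inv r)" using length_function_nonneg[OF l] r x by simp
  ultimately show ?thesis by linarith
qed

lemma conj_length_mult_le:
  assumes x: "x \<in> carrier G" and y: "y \<in> carrier G"
  shows "conj_length l (x \<otimes> y) \<le> conj_length l x + conj_length l y"
proof (rule conj_length_le)
  fix t t'' assume t: "t \<in> R" and t'': "t'' \<in> R" and inK: "t \<otimes> (x \<otimes> y) \<otimes> inv t'' \<in> K"
  obtain t' where t': "t' \<in> R" "(t \<otimes> x) \<otimes> inv t' \<in> K" using R_covers[of "t \<otimes> x"] x t R_closed by auto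
  have eq: "t' \<otimes> y \<otimes> inv t'' = inv (t \<otimes> x \<otimes> inv t') \<otimes> (t \<otimes> (x \<otimes> y) \<otimes> inv t'')"
    using t t' t'' x y R_closed by (simp add: m_assoc inv_mult_group inv_mult_cancel_left)
  have yK: "t' \<otimes> y \<otimes> inv t'' \<in> K" unfolding eq using t'(2) inK K_mult K_inv by auto
  have "t \<otimes> (x \<otimes> y) \<otimes> inv t'' = (t \<otimes> x \<otimes> inv t') \<otimes> (t' \<otimes> y \<otimes> inv t'')"
    using t t' t'' x y R_closed by (simp add: m_assoc inv_mult_cancel_left)
  then have "l (t \<otimes> (x \<otimes> y) \<otimes> inv t'') \<le> l (t \<otimes> x \<otimes> inv t') + l (t' \<otimes> y \<otimes> inv t'')"
    using length_function_mult_le[OF l t'(2) yK] by simp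
  also have "\<dots> \<le> conj_length l x + conj_length l y"
    using conj_length_ge[OF x t t'(1) t'(2)] conj_length_ge[OF y t'(1) t'' yK] by linarith
  finally show "l (t \<otimes> (x \<otimes> y) \<otimes> inv t'') \<le> conj_length l x + conj_length l y" .
qed (use x y in simp)

lemma conj_length_inv_le:
  assumes x: "x \<in> carrier G"
  shows "conj_length l (inv x) \<le> conj_length l x"
proof (rule conj_length_le)
  fix t t' assume t: "t \<in> R" "t' \<in> R" and inK: "t \<otimes> inv x \<otimes> inv t' \<in> K"
  have eq: "t \<otimes> inv x \<otimes> inv t' = inv (t' \<otimes> x \<otimes> inv t)"
    using t x R_closed by (simp add: m_assoc inv_mult_group)
  have "inv (inv (t' \<otimes> x \<otimes> inv t)) \<in> K" using inK unfolding eq by (rule K_inv)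
  then have xK: "t' \<otimes> x \<otimes> inv t \<in> K" using t x R_closed by simp
  have "l (t \<otimes> inv x \<otimes> inv t') = l (t' \<otimes> x \<otimes> inv t)"
    unfolding eq by (rule length_function_inv[OF l xK])
  also have "\<dots> \<le> conj_length l x" using conj_length_ge[OF x t(2) t(1) xK] .
  finally show "l (t \<otimes> inv x \<otimes> inv t') \<le> conj_length l x" .
qed (use x in simp)

lemma conj_length_inv: "x \<in> carrier G \<Longrightarrow> conj_length l (inv x) = conj_length l x"
  using conj_length_inv_le[of x] conj_length_inv_le[of "inv x"] by simp

lemma conj_length_bounded_on_H: "\<exists>B\<ge>0. \<forall>h\<in>H. conj_length l h \<le> B"
proof -
  have "\<forall>p\<in>R \<times> R. \<exists>b. \<forall>h\<in>H. fst p \<otimes> h \<otimes> inv (snd p) \<in> K \<longrightarrow> l (fst p \<otimes> h \<otimes> inv (snd p)) \<le> b"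
    using length_bounded_on_translates[OF l] R_closed by auto
  then obtain b where b: "\<And>p h. p \<in> R \<times> R \<Longrightarrow> h \<in> H \<Longrightarrow> fst p \<otimes> h \<otimes> inv (snd p) \<in> K \<Longrightarrow>
      l (fst p \<otimes> h \<otimes> inv (snd p)) \<le> b p"
    by metis
  define B where "B = (\<Sum>p\<in>R \<times> R. \<bar>b p\<bar>)"
  have "conj_length l h \<le> B" if h: "h \<in> H" for h
  proof (rule conj_length_le)
    fix t t' assume t: "t \<in> R" "t' \<in> R" "t \<otimes> h \<otimes> inv t' \<in> K"
    have "l (t \<otimes> h \<otimes> inv t') \<le> \<bar>b (t, t')\<bar>" using b[of "(t, t')" h] t h by simp
    also have "\<dots> \<le> B" unfolding B_def using t finite_R by (intro member_le_sum) auto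
    finally show "l (t \<otimes> h \<otimes> inv t') \<le> B" .
  qed (use h H_closed in simp)
  moreover have "B \<ge> 0" unfolding B_def by (simp add: sum_nonneg)
  ultimately show ?thesis by blast
qed

lemma bi_length_ge:
  assumes x: "x \<in> carrier G" and h: "h \<in> H" "h' \<in> H"
  shows "conj_length l (h \<otimes> x \<otimes> h') \<le> bi_length l x"
proof -
  obtain B where B: "B \<ge> 0" "\<And>h. h \<in> H \<Longrightarrow> conj_length l h \<le> B"
    using conj_length_bounded_on_H by auto
  have "conj_length l (fst p \<otimes> x \<otimes> snd p) \<le> conj_length l x + 2 * B" if p: "p \<in> H \<times> H" for p
  proof -
    have hp: "fst p \<in> H" "snd p \<in> H" using p by auto
    have "conj_length l (fst p \<otimes> x \<otimes> snd p) \<le> conj_length l (fst p \<otimes> x) + conj_length l (snd p)"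
      using conj_length_mult_le[of "fst p \<otimes> x" "snd p"] hp x H_closed by simp
    also have "\<dots> \<le> conj_length l (fst p) + conj_length l x + conj_length l (snd p)"
      using conj_length_mult_le[of "fst p" x] hp x H_closed by simp
    also have "\<dots> \<le> conj_length l x + 2 * B" using B(2)[OF hp(1)] B(2)[OF hp(2)] by simp
    finally show ?thesis .
  qed
  then have "bdd_above ((\<lambda>p. conj_length l (fst p \<otimes> x \<otimes> snd p)) ` (H \<times> H))"
    by (intro bdd_aboveI2) auto
  then show ?thesis unfolding bi_length_def using h by (intro cSUP_upper2[of _ _ "(h, h')"]) auto
qed

lemma bi_length_le:
  "(\<And>h h'. h \<in> H \<Longrightarrow> h' \<in> H \<Longrightarrow> conj_length l (h \<otimes> x \<otimes> h') \<le> B) \<Longrightarrow> bi_length l x \<le> B"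
  unfolding bi_length_def using H_one by (intro cSUP_least) auto

lemma conj_length_le_bi_length: "x \<in> carrier G \<Longrightarrow> conj_length l x \<le> bi_length l x"
  using bi_length_ge[of x \<one> \<one>] H_one by simp

lemma bi_length_nonneg: "x \<in> carrier G \<Longrightarrow> 0 \<le> bi_length l x"
  using conj_length_le_bi_length conj_length_nonneg by (meson order_trans)

lemma bi_length_mult_left_le:
  assumes x: "x \<in> carrier G" and h: "h \<in> H"
  shows "bi_length l (h \<otimes> x) \<le> bi_length l x"
proof (rule bi_length_le)
  fix h1 h2 assume hh: "h1 \<in> H" "h2 \<in> H"
  have "h1 \<otimes> (h \<otimes> x) \<otimes> h2 = (h1 \<otimes> h) \<otimes> x \<otimes> h2" using hh h x H_closed by (simp add: m_assoc)
  then show "conj_length l (h1 \<otimes> (h \<otimes> x) \<otimes> h2) \<le> bi_length l x"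
    using bi_length_ge[of x "h1 \<otimes> h" h2] hh h x H_mult by simp
qed

lemma bi_length_mult_right_le:
  assumes x: "x \<in> carrier G" and h: "h \<in> H"
  shows "bi_length l (x \<otimes> h) \<le> bi_length l x"
proof (rule bi_length_le)
  fix h1 h2 assume hh: "h1 \<in> H" "h2 \<in> H"
  have "h1 \<otimes> (x \<otimes> h) \<otimes> h2 = h1 \<otimes> x \<otimes> (h \<otimes> h2)" using hh h x H_closed by (simp add: m_assoc)
  then show "conj_length l (h1 \<otimes> (x \<otimes> h) \<otimes> h2) \<le> bi_length l x"
    using bi_length_ge[of x h1 "h \<otimes> h2"] hh h x H_mult by simp
qed

lemma bi_length_mult_le:
  assumes x: "x \<in> carrier G" and y: "y \<in> carrier G"
  shows "bi_length l (x \<otimes> y) \<le> bi_length l x + bi_length l y"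
proof (rule bi_length_le)
  fix h1 h2 assume hh: "h1 \<in> H" "h2 \<in> H"
  have "h1 \<otimes> (x \<otimes> y) \<otimes> h2 = (h1 \<otimes> x \<otimes> \<one>) \<otimes> (\<one> \<otimes> y \<otimes> h2)"
    using hh x y H_closed by (simp add: m_assoc)
  then have "conj_length l (h1 \<otimes> (x \<otimes> y) \<otimes> h2)
      \<le> conj_length l (h1 \<otimes> x \<otimes> \<one>) + conj_length l (\<one> \<otimes> y \<otimes> h2)"
    using conj_length_mult_le hh x y H_closed by simp
  also have "\<dots> \<le> bi_length l x + bi_length l y"
    using bi_length_ge[of x h1 \<one>] bi_length_ge[of y \<one> h2] hh x y H_one by simp
  finally show "conj_length l (h1 \<otimes> (x \<otimes> y) \<otimes> h2) \<le> bi_length l x + bi_length l y" .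
qed

lemma bi_length_inv_le:
  assumes x: "x \<in> carrier G"
  shows "bi_length l (inv x) \<le> bi_length l x"
proof (rule bi_length_le)
  fix h1 h2 assume hh: "h1 \<in> H" "h2 \<in> H"
  have "h1 \<otimes> inv x \<otimes> h2 = inv (inv h2 \<otimes> x \<otimes> inv h1)"
    using hh x H_closed by (simp add: m_assoc inv_mult_group)
  then have "conj_length l (h1 \<otimes> inv x \<otimes> h2) = conj_length l (inv h2 \<otimes> x \<otimes> inv h1)"
    using conj_length_inv hh x H_closed by simp
  also have "\<dots> \<le> bi_length l x" using bi_length_ge[of x "inv h2" "inv h1"] hh x H_inv by simp
  finally show "conj_length l (h1 \<otimes> inv x \<otimes> h2) \<le> bi_length l x" .
qed

lemma extended_length_mult_le:
  assumes x: "x \<in> carrier G" and y: "y \<in> carrier G"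
  shows "extended_length l (x \<otimes> y) \<le> extended_length l x + extended_length l y"
proof (cases "x \<otimes> y \<in> H")
  case True
  then show ?thesis unfolding extended_length_def using bi_length_nonneg x y by simp
next
  case xy: False
  consider "x \<in> H" | "y \<in> H" | "x \<notin> H" "y \<notin> H" by blast
  then show ?thesis
  proof cases
    case 1
    then have "y \<notin> H" using xy H_mult by auto
    then show ?thesis unfolding extended_length_def using xy 1 bi_length_mult_left_le[OF y 1] by simp
  next
    case 2
    then have "x \<notin> H" using xy H_mult by auto
    then show ?thesis unfolding extended_length_def using xy 2 bi_length_mult_right_le[OF x 2] by simp
  next
    case 3
    then show ?thesis unfolding extended_length_def using xy bi_length_mult_le[OF x y] by simp
  qed
qed

lemma length_function_extended_length: "length_function G (carrier G) H (extended_length l)"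
proof -
  have "extended_length l x = extended_length l (inv x)" if x: "x \<in> carrier G" for x
  proof -
    have "x \<in> H \<longleftrightarrow> inv x \<in> H" using H_inv x by (metis inv_inv)
    moreover have "bi_length l (inv x) = bi_length l x"
      using bi_length_inv_le[OF x] bi_length_inv_le[of "inv x"] x by simp
    ultimately show ?thesis unfolding extended_length_def by simp
  qed
  then show ?thesis unfolding length_function_def
    using extended_length_mult_le H_one by (auto simp: extended_length_def bi_length_nonneg)
qed

lemma length_le_extended_length:
  assumes x: "x \<in> K"
  shows "l x \<le> extended_length l x"
proof (cases "x \<in> H")
  case True
  then show ?thesis unfolding extended_length_def using length_function_zero[OF l] by simp
next
  case False
  have "l x \<le> conj_length l x" using length_le_conj_length x by simp
  also have "\<dots> \<le> bi_length l x" using conj_length_le_bi_length K_closed x by simp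
  finally show ?thesis unfolding extended_length_def using False by simp
qed

end

end

section \<open>Majorants on a subgroup\<close>

context hecke_chain
begin

text \<open>The weights \<open>1/deg\<close> make \<open>majorant f t\<close> dominate \<open>Hg \<mapsto> f(Hgt)\<close> on \<open>K\<close>
  (\<open>norm_le_majorant\<close>) while losing only a factor \<open>deg (t\<inverse>)\<close> in the weighted
  \<open>\<ell>\<^sup>2\<close>-norm (\<open>weighted_norm_majorant_le\<close>).\<close>

definition majorant :: "('a set \<Rightarrow> complex) \<Rightarrow> 'a \<Rightarrow> 'a set \<Rightarrow> complex" where
  "majorant f t c' = (if c' \<in> coset_space G K H
     then complex_of_real (sqrt (\<Sum>c\<in>dcosets2 (rep c') t. (cmod (f c))\<^sup>2 / real (dcos_deg (rep c))))
     else 0)"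

context
  fixes f t
  assumes f: "f \<in> hecke_algebra G (carrier G) H" and t: "t \<in> carrier G"
begin

lemma majorant_real: "majorant f t c = complex_of_real (cmod (majorant f t c))"
  unfolding majorant_def by (auto simp: sum_nonneg)

lemma norm_majorant_sq:
  assumes c': "c' \<in> coset_space G K H"
  shows "(cmod (majorant f t c'))\<^sup>2 =
    (\<Sum>c\<in>{c. f c \<noteq> 0}. if c \<in> dcosets2 (rep c') t then (cmod (f c))\<^sup>2 / real (dcos_deg (rep c)) else 0)"
proof -
  define S where "S = (\<Sum>c\<in>dcosets2 (rep c') t. (cmod (f c))\<^sup>2 / real (dcos_deg (rep c)))"
  have "S \<ge> 0" unfolding S_def by (intro sum_nonneg) auto
  then have "(cmod (majorant f t c'))\<^sup>2 = S" unfolding majorant_def S_def[symmetric] using c' by simp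
  also have "S = (\<Sum>c\<in>dcosets2 (rep c') t \<inter> {c. f c \<noteq> 0}. (cmod (f c))\<^sup>2 / real (dcos_deg (rep c)))"
    unfolding S_def by (rule sum.mono_neutral_right) (use finite_dcosets2 rep_closed[OF c'] t in auto)
  also have "\<dots> = (\<Sum>c\<in>{c. f c \<noteq> 0}.
      if c \<in> dcosets2 (rep c') t then (cmod (f c))\<^sup>2 / real (dcos_deg (rep c)) else 0)"
    by (subst Int_commute, rule sum.inter_restrict) (rule whole.hecke_algebra_finite_support[OF f])
  finally show ?thesis .
qed

lemma majorant_support:
  "majorant f t c' \<noteq> 0 \<Longrightarrow> c' \<in> (\<Union>c\<in>{c. f c \<noteq> 0}. dcosets2 (rep c) (inv t))"
proof -
  assume nz: "majorant f t c' \<noteq> 0"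
  then have c': "c' \<in> coset_space G K H" unfolding majorant_def by (auto split: if_splits)
  then have "(cmod (majorant f t c'))\<^sup>2 \<noteq> 0" using nz by simp
  then obtain c where "f c \<noteq> 0"
      "(if c \<in> dcosets2 (rep c') t then (cmod (f c))\<^sup>2 / real (dcos_deg (rep c)) else 0) \<noteq> 0"
    unfolding norm_majorant_sq[OF c'] by (blast dest: sum.not_neutral_contains_not_neutral)
  then have c: "f c \<noteq> 0" "c \<in> dcosets2 (rep c') t" by (auto split: if_splits)
  have "c' \<in> dcosets2 (rep c) (inv t)"
    using dcosets2_swap[OF rep_closed[OF c'] t c(2)] rcos_rep[OF c'] by simp
  then show ?thesis using c by blast
qed

lemma majorant_in_hecke_algebra: "majorant f t \<in> hecke_algebra G K H"
proof -
  have inv: "majorant f t (H #> (x \<otimes> h)) = majorant f t (H #> x)" if x: "x \<in> K" and h: "h \<in> H" for x h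
  proof -
    have "dcosets2 (rep (H #> (x \<otimes> h))) t = dcosets2 (rep (H #> x)) t"
      using dcosets2_rep dcosets2_mult_right x h t K_closed H_closed by simp
    moreover have "H #> (x \<otimes> h) \<in> coset_space G K H" "H #> x \<in> coset_space G K H"
      using rcos_in_coset_space x h H_subset_K K_mult by auto
    ultimately show ?thesis unfolding majorant_def by simp
  qed
  have "finite (\<Union>c\<in>{c. f c \<noteq> 0}. dcosets2 (rep c) (inv t))"
    using whole.hecke_algebra_finite_support[OF f] whole.hecke_algebra_support[OF f]
      finite_dcosets2 whole.rep_closed t by (intro finite_UN_I) auto
  moreover have "{c'. majorant f t c' \<noteq> 0} \<subseteq> (\<Union>c\<in>{c. f c \<noteq> 0}. dcosets2 (rep c) (inv t))"
    using majorant_support by blast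
  ultimately have "finite {c'. majorant f t c' \<noteq> 0}" by (rule finite_subset[rotated])
  moreover have "\<forall>c. c \<notin> coset_space G K H \<longrightarrow> majorant f t c = 0"
    by (simp add: majorant_def)
  ultimately show ?thesis unfolding hecke_algebra_def using inv by blast
qed

lemma norm_le_majorant:
  assumes g: "g \<in> K"
  shows "cmod (f (H #> (g \<otimes> t))) \<le> cmod (majorant f t (H #> g))"
proof -
  have gc: "g \<in> carrier G" using g K_closed by simp
  define S where "S = (\<Sum>c\<in>dcosets2 g t. (cmod (f c))\<^sup>2 / real (dcos_deg (rep c)))"
  have "(cmod (f c))\<^sup>2 / real (dcos_deg (rep c)) = (cmod (f (H #> (g \<otimes> t))))\<^sup>2 / real (dcos_deg (g \<otimes> t))"
    if c: "c \<in> dcosets (g \<otimes> t)" for c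
  proof -
    obtain h where h: "h \<in> H" "c = H #> (g \<otimes> t \<otimes> h)" using c unfolding dcosets_def by auto
    obtain k where k: "k \<in> H" "rep c = k \<otimes> (g \<otimes> t \<otimes> h)"
      using rep_rcosE[of "g \<otimes> t \<otimes> h"] h gc t H_closed by auto
    have "f c = f (H #> (g \<otimes> t))" using f h gc t unfolding hecke_algebra_def by auto
    moreover have "dcos_deg (rep c) = dcos_deg (g \<otimes> t)"
      using k h gc t dcos_deg_bi_invariant[of "g \<otimes> t" k h] H_closed by (simp add: m_assoc)
    ultimately show ?thesis by simp
  qed
  then have "(\<Sum>c\<in>dcosets (g \<otimes> t). (cmod (f c))\<^sup>2 / real (dcos_deg (rep c)))
      = (\<Sum>c\<in>dcosets (g \<otimes> t). (cmod (f (H #> (g \<otimes> t))))\<^sup>2 / real (dcos_deg (g \<otimes> t)))"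
    by (rule sum.cong[OF refl])
  also have "\<dots> = real (dcos_deg (g \<otimes> t)) * ((cmod (f (H #> (g \<otimes> t))))\<^sup>2 / real (dcos_deg (g \<otimes> t)))"
    by (simp add: dcos_deg_def)
  also have "\<dots> = (cmod (f (H #> (g \<otimes> t))))\<^sup>2" using dcos_deg_pos[of "g \<otimes> t"] gc t by simp
  finally have "(cmod (f (H #> (g \<otimes> t))))\<^sup>2 \<le> S"
    unfolding S_def using dcosets_subset_dcosets2[OF gc t] finite_dcosets2[OF gc t]
    by (metis (no_types, lifting) divide_nonneg_nonneg of_nat_0_le_iff sum_mono2 zero_le_power2)
  then have "cmod (f (H #> (g \<otimes> t))) \<le> sqrt S" by (simp add: real_le_rsqrt)
  moreover have "S \<ge> 0" unfolding S_def by (intro sum_nonneg) auto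
  moreover have "majorant f t (H #> g) = complex_of_real (sqrt S)"
    unfolding majorant_def S_def using rcos_in_coset_space[OF g] dcosets2_rep[OF gc t] by simp
  ultimately show ?thesis by simp
qed

end

context
  fixes l L :: "'a \<Rightarrow> real" and s :: real
  assumes l: "length_function G K H l" and L: "length_function G (carrier G) H L"
    and l_le_L: "\<And>x. x \<in> K \<Longrightarrow> l x \<le> L x" and s: "0 \<le> s"
begin

lemma weight_le_on_dcosets2:
  assumes t: "t \<in> carrier G" and c: "c \<in> coset_space G (carrier G) H" and c': "c' \<in> coset_space G K H"
    and cc': "c' \<in> dcosets2 (rep c) (inv t)"
  shows "(1 + l (rep c')) powr (2 * s) \<le> (1 + L (inv t)) powr (2 * s) * (1 + L (rep c)) powr (2 * s)"
proof -
  have rc: "rep c \<in> carrier G" using whole.rep_closed[OF c] .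
  have L0: "0 \<le> L (inv t)" "0 \<le> L (rep c)" using length_function_nonneg[OF L] rc t by auto
  obtain h h' where hh: "h \<in> H" "h' \<in> H" "c' = H #> (rep c \<otimes> h \<otimes> inv t \<otimes> h')"
    using cc' unfolding dcosets2_def by auto
  obtain k where k: "k \<in> H" "rep c' = k \<otimes> (rep c \<otimes> h \<otimes> inv t \<otimes> h')"
    using rep_rcosE[of "rep c \<otimes> h \<otimes> inv t \<otimes> h'"] hh rc t H_closed by auto
  have "rep c' = k \<otimes> rep c \<otimes> h \<otimes> inv t \<otimes> h'"
    using k hh rc t H_closed by (simp add: m_assoc)
  then have "l (rep c') \<le> L (rep c) + L (inv t)"
    using length_function_double_coset_le[OF L rc _ k(1) hh(1) hh(2), of "inv t"] t
      l_le_L[OF rep_in_K[OF c']] by simp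
  then have "1 + l (rep c') \<le> (1 + L (inv t)) * (1 + L (rep c))"
    using mult_nonneg_nonneg[OF L0] by (simp add: algebra_simps)
  then have "(1 + l (rep c')) powr (2 * s) \<le> ((1 + L (inv t)) * (1 + L (rep c))) powr (2 * s)"
    using length_function_nonneg[OF l rep_in_K[OF c']] s by (intro powr_mono2) auto
  also have "\<dots> = (1 + L (inv t)) powr (2 * s) * (1 + L (rep c)) powr (2 * s)"
    using L0 by (simp add: powr_mult)
  finally show ?thesis .
qed

lemma weighted_count_dcosets2_le:
  assumes t: "t \<in> carrier G" and c: "c \<in> coset_space G (carrier G) H"
    and Y: "finite Y" "Y \<subseteq> coset_space G K H"
  shows "(\<Sum>c'\<in>Y. if c \<in> dcosets2 (rep c') t then (1 + l (rep c')) powr (2 * s) else 0)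
    \<le> real (dcos_deg (rep c) * dcos_deg (inv t))
      * ((1 + L (inv t)) powr (2 * s) * (1 + L (rep c)) powr (2 * s))"
    (is "?lhs \<le> real ?n * ?w")
proof -
  have rc: "rep c \<in> carrier G" using whole.rep_closed[OF c] .
  have "?lhs \<le> (\<Sum>c'\<in>Y. if c' \<in> dcosets2 (rep c) (inv t) then ?w else 0)"
  proof (rule sum_mono)
    fix c' assume "c' \<in> Y"
    then have c': "c' \<in> coset_space G K H" using Y by auto
    show "(if c \<in> dcosets2 (rep c') t then (1 + l (rep c')) powr (2 * s) else 0)
        \<le> (if c' \<in> dcosets2 (rep c) (inv t) then ?w else 0)"
      using dcosets2_swap[OF rep_closed[OF c'] t] rcos_rep[OF c'] weight_le_on_dcosets2[OF t c c'] by auto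
  qed
  also have "\<dots> = real (card (Y \<inter> dcosets2 (rep c) (inv t))) * ?w"
    using sum.inter_restrict[OF Y(1), of "\<lambda>_. ?w" "dcosets2 (rep c) (inv t)"] by simp
  also have "\<dots> \<le> real ?n * ?w"
  proof (rule mult_right_mono)
    have "card (Y \<inter> dcosets2 (rep c) (inv t)) \<le> card (dcosets2 (rep c) (inv t))"
      using finite_dcosets2[OF rc] t by (intro card_mono) auto
    also have "\<dots> \<le> ?n" using card_dcosets2_le[OF rc] t by simp
    finally show "real (card (Y \<inter> dcosets2 (rep c) (inv t))) \<le> real ?n" by linarith
  qed simp
  finally show ?thesis .
qed

lemma weighted_norm_majorant_le:
  assumes f: "f \<in> hecke_algebra G (carrier G) H" and t: "t \<in> carrier G"
  shows "(\<Sum>\<^sub>\<infinity>c'\<in>coset_space G K H. (cmod (majorant f t c'))\<^sup>2 * (1 + l (rep c')) powr (2 * s))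
   \<le> real (dcos_deg (inv t)) * (1 + L (inv t)) powr (2 * s)
     * (\<Sum>\<^sub>\<infinity>c\<in>coset_space G (carrier G) H. (cmod (f c))\<^sup>2 * (1 + L (rep c)) powr (2 * s))"
proof -
  define Z where "Z = {c. f c \<noteq> 0}"
  define Y where "Y = (\<Union>c\<in>Z. dcosets2 (rep c) (inv t)) \<inter> coset_space G K H"
  define A where "A c = (cmod (f c))\<^sup>2 / real (dcos_deg (rep c))" for c
  define Wl where "Wl c' = (1 + l (rep c')) powr (2 * s)" for c'
  define WL where "WL c = (1 + L (rep c)) powr (2 * s)" for c
  define M where "M = (1 + L (inv t)) powr (2 * s)"
  have finZ: "finite Z" unfolding Z_def by (rule whole.hecke_algebra_finite_support[OF f])
  have ZS: "Z \<subseteq> coset_space G (carrier G) H" unfolding Z_def by (rule whole.hecke_algebra_support[OF f])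
  have degZ: "0 < dcos_deg (rep c)" if "c \<in> Z" for c
    using that ZS whole.rep_closed dcos_deg_pos by blast
  have finY: "finite Y" unfolding Y_def
    using ZS finite_dcosets2 whole.rep_closed t by (intro finite_Int[OF disjI1] finite_UN_I finZ) auto
  have "(\<Sum>\<^sub>\<infinity>c'\<in>coset_space G K H. (cmod (majorant f t c'))\<^sup>2 * Wl c')
      = (\<Sum>c'\<in>Y. (cmod (majorant f t c'))\<^sup>2 * Wl c')"
    by (rule infsum_finite_support[OF finY]) (use majorant_support[OF f t] in \<open>auto simp: Y_def Z_def\<close>)
  also have "\<dots> = (\<Sum>c'\<in>Y. \<Sum>c\<in>Z. (if c \<in> dcosets2 (rep c') t then A c else 0) * Wl c')"
    using norm_majorant_sq[OF f t] unfolding Y_def Z_def A_def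
    by (auto intro!: sum.cong simp: sum_distrib_right)
  also have "\<dots> = (\<Sum>c\<in>Z. A c * (\<Sum>c'\<in>Y. if c \<in> dcosets2 (rep c') t then Wl c' else 0))"
    by (subst sum.swap) (auto intro!: sum.cong simp: sum_distrib_left if_distrib)
  also have "\<dots> \<le> (\<Sum>c\<in>Z. A c * (real (dcos_deg (rep c) * dcos_deg (inv t)) * (M * WL c)))"
    using weighted_count_dcosets2_le[OF t _ finY] ZS unfolding Wl_def WL_def M_def A_def Y_def
    by (intro sum_mono mult_left_mono) auto
  also have "\<dots> = real (dcos_deg (inv t)) * M * (\<Sum>c\<in>Z. (cmod (f c))\<^sup>2 * WL c)"
    using degZ unfolding A_def by (auto simp: sum_distrib_left field_simps intro!: sum.cong)
  also have "(\<Sum>c\<in>Z. (cmod (f c))\<^sup>2 * WL c) = (\<Sum>\<^sub>\<infinity>c\<in>coset_space G (carrier G) H. (cmod (f c))\<^sup>2 * WL c)"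
    by (rule infsum_finite_support[symmetric, OF finZ ZS]) (auto simp: Z_def)
  finally show ?thesis unfolding Wl_def WL_def M_def .
qed

end

end

section \<open>Convolution estimates\<close>

context hecke_group
begin

text \<open>\<open>fibre_mass t xi\<close> is the push-forward of \<open>|xi|\<close> along \<open>d \<mapsto> H t (rep d)\<close>.\<close>

definition fibre :: "'a \<Rightarrow> 'a set \<Rightarrow> 'a set set" where
  "fibre t e = {d \<in> coset_space G (carrier G) H. H #> (t \<otimes> rep d) = e}"

definition fibre_mass :: "'a \<Rightarrow> ('a set \<Rightarrow> complex) \<Rightarrow> 'a set \<Rightarrow> real" where
  "fibre_mass t xi e = (\<Sum>d\<in>fibre t e. cmod (xi d))"

lemma fibre_subset:
  assumes t: "t \<in> carrier G"
  shows "fibre t e \<subseteq> (\<lambda>c. c #> rep e) ` dcosets (inv t)"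
proof
  fix d assume "d \<in> fibre t e"
  then have d: "d \<in> coset_space G (carrier G) H" and de: "H #> (t \<otimes> rep d) = e" unfolding fibre_def by auto
  have rd: "rep d \<in> carrier G" "H #> rep d = d" using whole.rep_closed[OF d] whole.rcos_rep[OF d] .
  obtain k where k: "k \<in> H" "rep e = k \<otimes> (t \<otimes> rep d)" using rep_rcosE[of "t \<otimes> rep d"] t rd de by auto
  have "inv t \<otimes> inv k \<otimes> rep e = rep d" using k t rd H_closed by (simp add: m_assoc inv_mult_cancel_left)
  then have "d = (H #> (inv t \<otimes> inv k)) #> rep e"
    using rcos_assoc[of "inv t \<otimes> inv k" "rep e"] rd k t H_closed by simp
  moreover have "H #> (inv t \<otimes> inv k) \<in> dcosets (inv t)" unfolding dcosets_def using k H_inv by auto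
  ultimately show "d \<in> (\<lambda>c. c #> rep e) ` dcosets (inv t)" by force
qed

lemma finite_fibre: "t \<in> carrier G \<Longrightarrow> finite (fibre t e)"
  using fibre_subset finite_dcosets[of "inv t"] by (meson finite_imageI finite_subset inv_closed)

lemma card_fibre_le:
  assumes t: "t \<in> carrier G"
  shows "card (fibre t e) \<le> dcos_deg (inv t)"
proof -
  have "card (fibre t e) \<le> card ((\<lambda>c. c #> rep e) ` dcosets (inv t))"
    using fibre_subset[OF t] finite_dcosets[of "inv t"] t by (intro card_mono) auto
  also have "\<dots> \<le> dcos_deg (inv t)"
    unfolding dcos_deg_def by (rule card_image_le) (use finite_dcosets t in simp)
  finally show ?thesis .
qed

lemma fibre_mass_nonneg: "0 \<le> fibre_mass t xi e"
  unfolding fibre_mass_def by (simp add: sum_nonneg)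

lemma sum_fibre_mass_sq_le:
  assumes t: "t \<in> carrier G" and xi: "in_l2 (coset_space G (carrier G) H) xi" and E: "finite E"
  shows "(\<Sum>e\<in>E. (fibre_mass t xi e)\<^sup>2)
    \<le> real (dcos_deg (inv t)) * (\<Sum>\<^sub>\<infinity>d\<in>coset_space G (carrier G) H. (cmod (xi d))\<^sup>2)"
proof -
  have "(\<Sum>e\<in>E. (fibre_mass t xi e)\<^sup>2) \<le> (\<Sum>e\<in>E. real (dcos_deg (inv t)) * (\<Sum>d\<in>fibre t e. (cmod (xi d))\<^sup>2))"
  proof (rule sum_mono)
    fix e
    have "(fibre_mass t xi e)\<^sup>2 \<le> (\<Sum>d\<in>fibre t e. (cmod (xi d))\<^sup>2) * real (card (fibre t e))"
      unfolding fibre_mass_def by (rule sum_squared_le_sum_of_squares)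
    also have "\<dots> \<le> (\<Sum>d\<in>fibre t e. (cmod (xi d))\<^sup>2) * real (dcos_deg (inv t))"
      using card_fibre_le[OF t] by (intro mult_left_mono) (auto intro: sum_nonneg)
    finally show "(fibre_mass t xi e)\<^sup>2 \<le> real (dcos_deg (inv t)) * (\<Sum>d\<in>fibre t e. (cmod (xi d))\<^sup>2)"
      by (simp add: mult_ac)
  qed
  also have "\<dots> = real (dcos_deg (inv t)) * (\<Sum>d\<in>(\<Union>e\<in>E. fibre t e). (cmod (xi d))\<^sup>2)"
  proof -
    have "(\<Sum>e\<in>E. \<Sum>d\<in>fibre t e. (cmod (xi d))\<^sup>2) = (\<Sum>d\<in>(\<Union>e\<in>E. fibre t e). (cmod (xi d))\<^sup>2)"
      by (rule sum.UNION_disjoint[symmetric]) (use E finite_fibre[OF t] in \<open>auto simp: fibre_def\<close>)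
    then show ?thesis by (simp add: sum_distrib_left[symmetric])
  qed
  also have "\<dots> \<le> real (dcos_deg (inv t)) * (\<Sum>\<^sub>\<infinity>d\<in>coset_space G (carrier G) H. (cmod (xi d))\<^sup>2)"
    using xi E finite_fibre[OF t] unfolding in_l2_def
    by (intro mult_left_mono finite_sum_le_infsum) (auto simp: fibre_def)
  finally show ?thesis .
qed

lemma coset_space_rcos:
  assumes c: "c \<in> coset_space G (carrier G) H" and r: "r \<in> carrier G"
  shows "c #> r = H #> (rep c \<otimes> r)"
  using rcos_assoc[of "rep c" r] whole.rep_closed[OF c] whole.rcos_rep[OF c] r by simp

lemma inj_on_rcos_right:
  assumes r: "r \<in> carrier G"
  shows "inj_on (\<lambda>e. e #> r) (coset_space G (carrier G) H)"
proof (rule inj_onI)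
  fix a b assume a: "a \<in> coset_space G (carrier G) H" and b: "b \<in> coset_space G (carrier G) H"
    and eq: "a #> r = b #> r"
  have cancel: "(c #> r) #> inv r = c" if c: "c \<in> coset_space G (carrier G) H" for c
  proof -
    have "(c #> r) #> inv r = H #> (rep c \<otimes> r \<otimes> inv r)"
      using coset_space_rcos[OF c r] rcos_assoc whole.rep_closed[OF c] r by simp
    also have "\<dots> = c" using whole.rep_closed[OF c] whole.rcos_rep[OF c] r by (simp add: m_assoc)
    finally show ?thesis .
  qed
  have "a = (a #> r) #> inv r" using cancel[OF a] by simp
  also have "\<dots> = b" using eq cancel[OF b] by simp
  finally show "a = b" .
qed

end

context hecke_chain
begin

lemma hecke_kernel_rcos_right:
  assumes f: "f \<in> hecke_algebra G K H" and r: "r \<in> carrier G"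
    and c: "c \<in> coset_space G K H" and e: "e \<in> coset_space G K H"
  shows "f (H #> (rep (c #> r) \<otimes> inv (rep (e #> r)))) = f (H #> (rep c \<otimes> inv (rep e)))"
proof -
  have rc: "rep c \<in> K" "rep c \<in> carrier G" using rep_in_K[OF c] rep_closed[OF c] .
  have re: "rep e \<in> K" "rep e \<in> carrier G" using rep_in_K[OF e] rep_closed[OF e] .
  obtain k1 where k1: "k1 \<in> H" "rep (c #> r) = k1 \<otimes> (rep c \<otimes> r)"
    using rep_rcosE[OF m_closed[OF rc(2) r]] coset_space_rcos[OF subsetD[OF coset_space_subset c] r]
    by metis
  obtain k2 where k2: "k2 \<in> H" "rep (e #> r) = k2 \<otimes> (rep e \<otimes> r)"
    using rep_rcosE[OF m_closed[OF re(2) r]] coset_space_rcos[OF subsetD[OF coset_space_subset e] r]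
    by metis
  have "rep (c #> r) \<otimes> inv (rep (e #> r)) = k1 \<otimes> (rep c \<otimes> inv (rep e)) \<otimes> inv k2"
    using k1 k2 rc re r H_closed by (simp add: m_assoc inv_mult_group mult_inv_cancel_left)
  then show ?thesis
    using hecke_algebra_bi_invariant[OF f, of "rep c \<otimes> inv (rep e)" k1 "inv k2"] k1 k2 rc re H_inv K_mult K_inv
    by simp
qed

lemma hecke_kernel_outside_rcos_right:
  assumes f: "f \<in> hecke_algebra G K H" and r: "r \<in> carrier G" and c: "c \<in> coset_space G K H"
    and d: "d \<in> coset_space G (carrier G) H" "d \<notin> (\<lambda>e. e #> r) ` coset_space G K H"
  shows "f (H #> (rep (c #> r) \<otimes> inv (rep d))) = 0"
proof -
  have rc: "rep c \<in> K" "rep c \<in> carrier G" using rep_in_K[OF c] rep_closed[OF c] .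
  have rd: "rep d \<in> carrier G" "H #> rep d = d" using whole.rep_closed[OF d(1)] whole.rcos_rep[OF d(1)] .
  obtain k where k: "k \<in> H" "rep (c #> r) = k \<otimes> (rep c \<otimes> r)"
    using rep_rcosE[OF m_closed[OF rc(2) r]] coset_space_rcos[OF subsetD[OF coset_space_subset c] r]
    by metis
  have "rep (c #> r) \<otimes> inv (rep d) \<notin> K"
  proof
    assume q: "rep (c #> r) \<otimes> inv (rep d) \<in> K"
    have "rep d \<otimes> inv r = inv (rep (c #> r) \<otimes> inv (rep d)) \<otimes> k \<otimes> rep c"
      using k rd rc r H_closed by (simp add: m_assoc inv_mult_group)
    then have "rep d \<otimes> inv r \<in> K" using q k H_subset_K rc K_mult K_inv by auto
    moreover have "d = (H #> (rep d \<otimes> inv r)) #> r"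
      using rcos_assoc[of "rep d \<otimes> inv r" r] rd r by (simp add: m_assoc)
    ultimately show False using d rcos_in_coset_space by blast
  qed
  then have "H #> (rep (c #> r) \<otimes> inv (rep d)) \<notin> coset_space G K H"
    using in_K_if_rcos_in_coset_space rd k rc r H_closed by auto
  then show ?thesis using hecke_algebra_zero[OF f] by simp
qed

lemma hconv_rcos_right:
  assumes f: "f \<in> hecke_algebra G K H" and r: "r \<in> carrier G" and c: "c \<in> coset_space G K H"
  shows "hconv G (carrier G) H f xi (c #> r) = hconv G K H f (\<lambda>e. xi (e #> r)) c"
proof -
  let ?SG = "coset_space G (carrier G) H" and ?SK = "coset_space G K H"
  define T where "T d = f (H #> (rep (c #> r) \<otimes> inv (rep d))) * xi d" for d
  have "(\<lambda>e. e #> r) ` ?SK \<subseteq> ?SG"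
    using coset_space_rcos coset_space_subset rep_closed r whole.rcos_in_coset_space by auto
  then have "hconv G (carrier G) H f xi (c #> r) = infsum T ((\<lambda>e. e #> r) ` ?SK)"
    unfolding hconv_def T_def
    by (intro infsum_cong_neutral) (use hecke_kernel_outside_rcos_right[OF f r c] in auto)
  also have "\<dots> = infsum (T \<circ> (\<lambda>e. e #> r)) ?SK"
    by (rule infsum_reindex) (rule inj_on_subset[OF inj_on_rcos_right[OF r] coset_space_subset])
  also have "\<dots> = hconv G K H f (\<lambda>e. xi (e #> r)) c"
    unfolding hconv_def T_def using hecke_kernel_rcos_right[OF f r c] by (intro infsum_cong) simp
  finally show ?thesis .
qed

lemma RD_inequality_finite_support:
  assumes RD: "RD_inequality G K H l s C" and C: "0 \<le> C" and f: "f \<in> hecke_algebra G K H"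
    and E: "finite E" "E \<subseteq> coset_space G K H" and z: "\<And>e. e \<in> coset_space G K H - E \<Longrightarrow> z e = 0"
    and F: "finite F" "F \<subseteq> coset_space G K H"
  shows "(\<Sum>c\<in>F. (cmod (hconv G K H f z c))\<^sup>2)
    \<le> C\<^sup>2 * (\<Sum>\<^sub>\<infinity>c\<in>coset_space G K H. (cmod (f c))\<^sup>2 * (1 + l (rep c)) powr (2 * s))
      * (\<Sum>e\<in>E. (cmod (z e))\<^sup>2)"
proof -
  let ?SK = "coset_space G K H"
  define W where "W = (\<Sum>\<^sub>\<infinity>c\<in>?SK. (cmod (f c))\<^sup>2 * (1 + l (rep c)) powr (2 * s))"
  define Y where "Y = (\<Union>e\<in>E. {c \<in> ?SK. f (H #> (rep c \<otimes> inv (rep e))) \<noteq> 0})"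
  have finY: "finite Y" unfolding Y_def
    using E finite_column_support[OF f] rep_closed by (intro finite_UN_I) auto
  have "hconv G K H f z c = 0" if "c \<in> ?SK - Y" for c
    unfolding hconv_def by (rule infsum_0) (use that z in \<open>auto simp: Y_def\<close>)
  then have summable: "(\<lambda>c. (cmod (hconv G K H f z c))\<^sup>2) summable_on ?SK"
    by (intro summable_on_finite_support[OF finY]) simp
  have z_l2: "in_l2 ?SK z" unfolding in_l2_def
    by (rule summable_on_finite_support[OF E(1)]) (simp add: z)
  have "(\<Sum>\<^sub>\<infinity>c\<in>?SK. (cmod (z c))\<^sup>2) = (\<Sum>e\<in>E. (cmod (z e))\<^sup>2)"
    by (rule infsum_finite_support[OF E]) (simp add: z)
  then have "sqrt (\<Sum>\<^sub>\<infinity>c\<in>?SK. (cmod (hconv G K H f z c))\<^sup>2) \<le> C * sqrt W * sqrt (\<Sum>e\<in>E. (cmod (z e))\<^sup>2)"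
    using RD[unfolded RD_inequality_def, rule_format, OF f z_l2] unfolding l2_norm_def W_def by simp
  then have "(\<Sum>\<^sub>\<infinity>c\<in>?SK. (cmod (hconv G K H f z c))\<^sup>2) \<le> (C * sqrt W * sqrt (\<Sum>e\<in>E. (cmod (z e))\<^sup>2))\<^sup>2"
    by (rule sqrt_le_D)
  also have "\<dots> = C\<^sup>2 * W * (\<Sum>e\<in>E. (cmod (z e))\<^sup>2)"
    unfolding W_def by (simp add: power_mult_distrib sum_nonneg infsum_nonneg)
  finally show ?thesis
    using finite_sum_le_infsum[OF summable F] unfolding W_def by fastforce
qed

text \<open>Truncating \<open>z\<close> to the finitely many cosets that matter on \<open>F\<close> makes it
  square summable, so the inequality applies to arbitrary \<open>z\<close> on finite sets.\<close>

lemma RD_inequality_finite_sums: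
  assumes RD: "RD_inequality G K H l s C" and C: "0 \<le> C"
    and f: "f \<in> hecke_algebra G K H" and F: "finite F" "F \<subseteq> coset_space G K H"
  obtains E where "finite E" "E \<subseteq> coset_space G K H"
    "(\<Sum>c\<in>F. (cmod (hconv G K H f z c))\<^sup>2)
      \<le> C\<^sup>2 * (\<Sum>\<^sub>\<infinity>c\<in>coset_space G K H. (cmod (f c))\<^sup>2 * (1 + l (rep c)) powr (2 * s))
        * (\<Sum>e\<in>E. (cmod (z e))\<^sup>2)"
proof
  let ?SK = "coset_space G K H"
  define E where "E = (\<Union>c\<in>F. {e \<in> ?SK. f (H #> (rep c \<otimes> inv (rep e))) \<noteq> 0})"
  define zE where "zE e = (if e \<in> E then z e else 0)" for e
  show finE: "finite E" unfolding E_def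
    using F finite_row_support[OF f] rep_closed by (intro finite_UN_I) auto
  show ES: "E \<subseteq> ?SK" unfolding E_def by auto
  have "hconv G K H f zE c = hconv G K H f z c" if "c \<in> F" for c
    unfolding hconv_def zE_def by (rule infsum_cong) (use that in \<open>auto simp: E_def\<close>)
  then have "(\<Sum>c\<in>F. (cmod (hconv G K H f z c))\<^sup>2) = (\<Sum>c\<in>F. (cmod (hconv G K H f zE c))\<^sup>2)"
    by simp
  also have "\<dots> \<le> C\<^sup>2 * (\<Sum>\<^sub>\<infinity>c\<in>?SK. (cmod (f c))\<^sup>2 * (1 + l (rep c)) powr (2 * s)) * (\<Sum>e\<in>E. (cmod (zE e))\<^sup>2)"
    by (rule RD_inequality_finite_support[OF RD C f finE ES _ F]) (simp add: zE_def)
  also have "(\<Sum>e\<in>E. (cmod (zE e))\<^sup>2) = (\<Sum>e\<in>E. (cmod (z e))\<^sup>2)"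
    by (rule sum.cong) (auto simp: zE_def)
  finally show "(\<Sum>c\<in>F. (cmod (hconv G K H f z c))\<^sup>2)
      \<le> C\<^sup>2 * (\<Sum>\<^sub>\<infinity>c\<in>?SK. (cmod (f c))\<^sup>2 * (1 + l (rep c)) powr (2 * s)) * (\<Sum>e\<in>E. (cmod (z e))\<^sup>2)" .
qed

lemma sum_majorant_le_hconv_fibre_mass:
  assumes f: "f \<in> hecke_algebra G (carrier G) H" and t: "t \<in> carrier G"
    and c: "c \<in> coset_space G (carrier G) H" and D: "finite D" "D \<subseteq> coset_space G (carrier G) H"
  shows "(\<Sum>d\<in>D. cmod (majorant f t (H #> (rep c \<otimes> inv (rep (H #> (t \<otimes> rep d)))))) * cmod (xi d))
    \<le> cmod (hconv G (carrier G) H (majorant f t) (\<lambda>e. complex_of_real (fibre_mass t xi e)) c)"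
proof -
  let ?SG = "coset_space G (carrier G) H"
  define F where "F e = cmod (majorant f t (H #> (rep c \<otimes> inv (rep e))))" for e
  define Ec where "Ec = {e \<in> ?SG. majorant f t (H #> (rep c \<otimes> inv (rep e))) \<noteq> 0}"
  define D2 where "D2 = (\<Union>e\<in>Ec. fibre t e)"
  have majG: "majorant f t \<in> hecke_algebra G (carrier G) H"
    using majorant_in_hecke_algebra[OF f t] hecke_algebra_subset by auto
  have finEc: "finite Ec"
    unfolding Ec_def by (rule whole.finite_row_support[OF majG whole.rep_closed[OF c]])
  have finD2: "finite D2" unfolding D2_def using finEc finite_fibre[OF t] by auto
  have vanish: "F (H #> (t \<otimes> rep d)) = 0" if "d \<in> D - D2" for d
  proof -
    have d: "d \<in> ?SG" using that D by auto
    then have "d \<in> fibre t (H #> (t \<otimes> rep d))" unfolding fibre_def by auto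
    then have "H #> (t \<otimes> rep d) \<notin> Ec" using that unfolding D2_def by auto
    moreover have "H #> (t \<otimes> rep d) \<in> ?SG"
      using whole.rcos_in_coset_space whole.rep_closed[OF d] t by simp
    ultimately show ?thesis unfolding Ec_def F_def by auto
  qed
  have "(\<Sum>d\<in>D. F (H #> (t \<otimes> rep d)) * cmod (xi d)) = (\<Sum>d\<in>D \<inter> D2. F (H #> (t \<otimes> rep d)) * cmod (xi d))"
    by (rule sum.mono_neutral_right) (use D vanish in auto)
  also have "\<dots> \<le> (\<Sum>d\<in>D2. F (H #> (t \<otimes> rep d)) * cmod (xi d))"
    by (rule sum_mono2[OF finD2]) (auto simp: F_def)
  also have "\<dots> = (\<Sum>e\<in>Ec. \<Sum>d\<in>fibre t e. F (H #> (t \<otimes> rep d)) * cmod (xi d))"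
    unfolding D2_def
    by (rule sum.UNION_disjoint) (use finEc finite_fibre[OF t] in \<open>auto simp: fibre_def\<close>)
  also have "\<dots> = (\<Sum>e\<in>Ec. F e * fibre_mass t xi e)"
    unfolding fibre_mass_def by (auto simp: sum_distrib_left fibre_def intro!: sum.cong)
  also have "\<dots> = cmod (\<Sum>e\<in>Ec. majorant f t (H #> (rep c \<otimes> inv (rep e))) * complex_of_real (fibre_mass t xi e))"
    unfolding F_def by (rule norm_sum_of_real_mult[symmetric]) (use majorant_real[OF f t] fibre_mass_nonneg in auto)
  also have "(\<Sum>e\<in>Ec. majorant f t (H #> (rep c \<otimes> inv (rep e))) * complex_of_real (fibre_mass t xi e))
      = hconv G (carrier G) H (majorant f t) (\<lambda>e. complex_of_real (fibre_mass t xi e)) c"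
    unfolding hconv_def by (rule infsum_finite_support[symmetric, OF finEc]) (auto simp: Ec_def)
  finally show ?thesis unfolding F_def .
qed

lemma sum_sq_hconv_fibre_mass_rcos_right_le:
  assumes RD: "RD_inequality G K H l s C" and C: "0 \<le> C"
    and g: "g \<in> hecke_algebra G K H" and r: "r \<in> carrier G" and t: "t \<in> carrier G"
    and xi: "in_l2 (coset_space G (carrier G) H) xi"
    and F: "finite F" "F \<subseteq> coset_space G K H"
  shows "(\<Sum>c\<in>F. (cmod (hconv G (carrier G) H g (\<lambda>e. complex_of_real (fibre_mass t xi e)) (c #> r)))\<^sup>2)
    \<le> C\<^sup>2 * (\<Sum>\<^sub>\<infinity>c\<in>coset_space G K H. (cmod (g c))\<^sup>2 * (1 + l (rep c)) powr (2 * s))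
      * (real (dcos_deg (inv t)) * (\<Sum>\<^sub>\<infinity>d\<in>coset_space G (carrier G) H. (cmod (xi d))\<^sup>2))"
proof -
  define z where "z e = complex_of_real (fibre_mass t xi (e #> r))" for e
  define W where "W = (\<Sum>\<^sub>\<infinity>c\<in>coset_space G K H. (cmod (g c))\<^sup>2 * (1 + l (rep c)) powr (2 * s))"
  obtain E where E: "finite E" "E \<subseteq> coset_space G K H"
    and bound: "(\<Sum>c\<in>F. (cmod (hconv G K H g z c))\<^sup>2) \<le> C\<^sup>2 * W * (\<Sum>e\<in>E. (cmod (z e))\<^sup>2)"
    using RD_inequality_finite_sums[OF RD C g F] unfolding W_def by blast
  have "(\<Sum>e\<in>E. (cmod (z e))\<^sup>2) = (\<Sum>e\<in>(\<lambda>e. e #> r) ` E. (fibre_mass t xi e)\<^sup>2)"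
    unfolding z_def using inj_on_subset[OF inj_on_rcos_right[OF r] subset_trans[OF E(2) coset_space_subset]]
    by (simp add: sum.reindex fibre_mass_nonneg)
  also have "\<dots> \<le> real (dcos_deg (inv t)) * (\<Sum>\<^sub>\<infinity>d\<in>coset_space G (carrier G) H. (cmod (xi d))\<^sup>2)"
    using sum_fibre_mass_sq_le[OF t xi] E(1) by simp
  finally have "C\<^sup>2 * W * (\<Sum>e\<in>E. (cmod (z e))\<^sup>2)
      \<le> C\<^sup>2 * W * (real (dcos_deg (inv t)) * (\<Sum>\<^sub>\<infinity>d\<in>coset_space G (carrier G) H. (cmod (xi d))\<^sup>2))"
    unfolding W_def by (intro mult_left_mono mult_nonneg_nonneg infsum_nonneg) auto
  moreover have "hconv G (carrier G) H g (\<lambda>e. complex_of_real (fibre_mass t xi e)) (c #> r) = hconv G K H g z c"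
    if "c \<in> F" for c
    using hconv_rcos_right[OF g r] that F(2) unfolding z_def by auto
  ultimately show ?thesis using bound unfolding W_def by simp
qed

end

context hecke_transversal
begin

lemma norm_le_sum_majorants:
  assumes f: "f \<in> hecke_algebra G (carrier G) H"
    and c: "c \<in> coset_space G (carrier G) H" and d: "d \<in> coset_space G (carrier G) H"
  shows "cmod (f (H #> (rep c \<otimes> inv (rep d))))
     \<le> (\<Sum>t\<in>R. cmod (majorant f t (H #> (rep c \<otimes> inv (rep (H #> (t \<otimes> rep d)))))))"
proof -
  have rc: "rep c \<in> carrier G" and rd: "rep d \<in> carrier G"
    using whole.rep_closed[OF c] whole.rep_closed[OF d] .
  obtain t where t: "t \<in> R" "(rep c \<otimes> inv (rep d)) \<otimes> inv t \<in> K"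
    using R_covers[of "rep c \<otimes> inv (rep d)"] rc rd by auto
  have tc: "t \<in> carrier G" using R_closed[OF t(1)] .
  define g where "g = rep c \<otimes> inv (rep d) \<otimes> inv t"
  have gK: "g \<in> K" unfolding g_def using t by simp
  obtain k where k: "k \<in> H" "rep (H #> (t \<otimes> rep d)) = k \<otimes> (t \<otimes> rep d)"
    using rep_rcosE[of "t \<otimes> rep d"] tc rd by auto
  have "rep c \<otimes> inv (rep (H #> (t \<otimes> rep d))) = g \<otimes> inv k"
    unfolding g_def using k tc rc rd H_closed by (simp add: m_assoc inv_mult_group)
  moreover have "majorant f t (H #> (g \<otimes> inv k)) = majorant f t (H #> g)"
    using majorant_in_hecke_algebra[OF f tc] gK H_inv[OF k(1)] unfolding hecke_algebra_def by auto
  moreover have "g \<otimes> t = rep c \<otimes> inv (rep d)" unfolding g_def using tc rc rd by (simp add: m_assoc)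
  ultimately have "cmod (f (H #> (rep c \<otimes> inv (rep d))))
      \<le> cmod (majorant f t (H #> (rep c \<otimes> inv (rep (H #> (t \<otimes> rep d))))))"
    using norm_le_majorant[OF f tc gK] by simp
  also have "\<dots> \<le> (\<Sum>t\<in>R. cmod (majorant f t (H #> (rep c \<otimes> inv (rep (H #> (t \<otimes> rep d)))))))"
    by (rule member_le_sum[OF t(1)]) (auto simp: finite_R)
  finally show ?thesis .
qed

lemma norm_hconv_le_sum_majorants:
  assumes f: "f \<in> hecke_algebra G (carrier G) H" and c: "c \<in> coset_space G (carrier G) H"
  shows "cmod (hconv G (carrier G) H f xi c)
    \<le> (\<Sum>t\<in>R. cmod (hconv G (carrier G) H (majorant f t) (\<lambda>e. complex_of_real (fibre_mass t xi e)) c))"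
proof -
  let ?SG = "coset_space G (carrier G) H"
  define D where "D = {d \<in> ?SG. f (H #> (rep c \<otimes> inv (rep d))) \<noteq> 0}"
  have finD: "finite D" unfolding D_def by (rule whole.finite_row_support[OF f whole.rep_closed[OF c]])
  have "hconv G (carrier G) H f xi c = (\<Sum>d\<in>D. f (H #> (rep c \<otimes> inv (rep d))) * xi d)"
    unfolding hconv_def by (rule infsum_finite_support[OF finD]) (auto simp: D_def)
  then have "cmod (hconv G (carrier G) H f xi c) \<le> (\<Sum>d\<in>D. cmod (f (H #> (rep c \<otimes> inv (rep d)))) * cmod (xi d))"
    by (simp add: norm_mult[symmetric] norm_sum)
  also have "\<dots> \<le> (\<Sum>d\<in>D. (\<Sum>t\<in>R. cmod (majorant f t (H #> (rep c \<otimes> inv (rep (H #> (t \<otimes> rep d))))))) * cmod (xi d))"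
    using norm_le_sum_majorants[OF f c] unfolding D_def by (intro sum_mono mult_right_mono) auto
  also have "\<dots> = (\<Sum>t\<in>R. \<Sum>d\<in>D. cmod (majorant f t (H #> (rep c \<otimes> inv (rep (H #> (t \<otimes> rep d)))))) * cmod (xi d))"
    by (simp add: sum_distrib_right sum.swap[of _ D R])
  also have "\<dots> \<le> (\<Sum>t\<in>R. cmod (hconv G (carrier G) H (majorant f t) (\<lambda>e. complex_of_real (fibre_mass t xi e)) c))"
    using sum_majorant_le_hconv_fibre_mass[OF f R_closed c finD] by (intro sum_mono) (auto simp: D_def)
  finally show ?thesis .
qed

lemma coset_space_covered_by_translates:
  assumes "F \<subseteq> coset_space G (carrier G) H"
  shows "F \<subseteq> (\<Union>r\<in>R. (\<lambda>e. e #> r) ` ((\<lambda>e. e #> r) -` F \<inter> coset_space G K H))"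
proof
  fix c assume cF: "c \<in> F"
  then have c: "c \<in> coset_space G (carrier G) H" using assms by auto
  obtain r where r: "r \<in> R" "rep c \<otimes> inv r \<in> K" using R_covers whole.rep_closed[OF c] by auto
  have "(H #> (rep c \<otimes> inv r)) #> r = c"
    using rcos_assoc[of "rep c \<otimes> inv r" r] whole.rep_closed[OF c] whole.rcos_rep[OF c] R_closed[OF r(1)]
    by (simp add: m_assoc)
  then show "c \<in> (\<Union>r\<in>R. (\<lambda>e. e #> r) ` ((\<lambda>e. e #> r) -` F \<inter> coset_space G K H))"
    using r cF rcos_in_coset_space[OF r(2)] by (intro UN_I[OF r(1)] image_eqI[of _ _ "H #> (rep c \<otimes> inv r)"]) auto
qed

lemma sum_sq_hconv_fibre_mass_le:
  assumes RD: "RD_inequality G K H l s C" and C: "0 \<le> C"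
    and f: "f \<in> hecke_algebra G (carrier G) H" and t: "t \<in> carrier G"
    and xi: "in_l2 (coset_space G (carrier G) H) xi"
    and F: "finite F" "F \<subseteq> coset_space G (carrier G) H"
  shows "(\<Sum>c\<in>F. (cmod (hconv G (carrier G) H (majorant f t) (\<lambda>e. complex_of_real (fibre_mass t xi e)) c))\<^sup>2)
    \<le> real (card R) * (C\<^sup>2 * (\<Sum>\<^sub>\<infinity>c\<in>coset_space G K H. (cmod (majorant f t c))\<^sup>2 * (1 + l (rep c)) powr (2 * s))
        * (real (dcos_deg (inv t)) * (\<Sum>\<^sub>\<infinity>d\<in>coset_space G (carrier G) H. (cmod (xi d))\<^sup>2)))"
    (is "sum ?V F \<le> _ * ?B")
proof -
  define Fr where "Fr r = (\<lambda>e. e #> r) -` F \<inter> coset_space G K H" for r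
  have injK: "inj_on (\<lambda>e. e #> r) (coset_space G K H)" if "r \<in> R" for r
    using inj_on_subset[OF inj_on_rcos_right[OF R_closed[OF that]] coset_space_subset] .
  have inj: "inj_on (\<lambda>e. e #> r) (Fr r)" if "r \<in> R" for r
    using inj_on_subset[OF injK[OF that]] by (auto simp: Fr_def)
  have finFr: "finite (Fr r)" if "r \<in> R" for r
    unfolding Fr_def using F(1) injK[OF that] by (intro finite_vimage_IntI)
  have "sum ?V F \<le> sum ?V (\<Union>r\<in>R. (\<lambda>e. e #> r) ` Fr r)"
    using coset_space_covered_by_translates[OF F(2)] finite_R finFr unfolding Fr_def
    by (intro sum_mono2) auto
  also have "\<dots> \<le> (\<Sum>r\<in>R. sum ?V ((\<lambda>e. e #> r) ` Fr r))"
    by (rule sum_UN_le_sum_nonneg[OF finite_R]) (use finFr in auto)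
  also have "\<dots> = (\<Sum>r\<in>R. \<Sum>c\<in>Fr r. ?V (c #> r))"
    by (rule sum.cong[OF refl]) (simp add: sum.reindex[OF inj])
  also have "\<dots> \<le> (\<Sum>r\<in>R. ?B)"
    using sum_sq_hconv_fibre_mass_rcos_right_le[OF RD C majorant_in_hecke_algebra[OF f t] R_closed t xi finFr]
    by (intro sum_mono) (auto simp: Fr_def)
  finally show ?thesis by simp
qed

text \<open>One factor \<open>card R\<close> comes from Cauchy-Schwarz over \<open>t \<in> R\<close>, the other from covering
  \<open>coset_space G (carrier G) H\<close> by the \<open>card R\<close> translates of \<open>coset_space G K H\<close>.\<close>

definition RD_constant :: "('a \<Rightarrow> real) \<Rightarrow> real \<Rightarrow> real" where
  "RD_constant L s = (real (card R))\<^sup>2 * (\<Sum>t\<in>R. (real (dcos_deg (inv t)))\<^sup>2 * (1 + L (inv t)) powr (2 * s))"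

lemma RD_constant_pos:
  assumes L: "length_function G (carrier G) H L"
  shows "RD_constant L s > 0"
proof -
  have "0 < (real (dcos_deg (inv t)))\<^sup>2 * (1 + L (inv t)) powr (2 * s)" if "t \<in> R" for t
    using dcos_deg_pos[of "inv t"] length_function_nonneg[OF L, of "inv t"] R_closed[OF that] by simp
  then have "0 < (\<Sum>t\<in>R. (real (dcos_deg (inv t)))\<^sup>2 * (1 + L (inv t)) powr (2 * s))"
    using finite_R one_in_R by (intro sum_pos) auto
  moreover have "card R > 0" using finite_R one_in_R by (auto simp: card_gt_0_iff)
  ultimately show ?thesis unfolding RD_constant_def by simp
qed

context
  fixes l s C
  assumes l: "length_function G K H l" and s: "0 \<le> s"
    and RD: "RD_inequality G K H l s C" and C: "0 \<le> C"
begin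

lemma sum_sq_hconv_le:
  assumes f: "f \<in> hecke_algebra G (carrier G) H" and xi: "in_l2 (coset_space G (carrier G) H) xi"
    and F: "finite F" "F \<subseteq> coset_space G (carrier G) H"
  shows "(\<Sum>c\<in>F. (cmod (hconv G (carrier G) H f xi c))\<^sup>2)
    \<le> C\<^sup>2 * RD_constant (extended_length l) s
      * (\<Sum>\<^sub>\<infinity>c\<in>coset_space G (carrier G) H. (cmod (f c))\<^sup>2 * (1 + extended_length l (rep c)) powr (2 * s))
      * (\<Sum>\<^sub>\<infinity>d\<in>coset_space G (carrier G) H. (cmod (xi d))\<^sup>2)"
proof -
  let ?SG = "coset_space G (carrier G) H"
  define L where "L = extended_length l"
  define W where "W = (\<Sum>\<^sub>\<infinity>c\<in>?SG. (cmod (f c))\<^sup>2 * (1 + L (rep c)) powr (2 * s))"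
  define X2 where "X2 = (\<Sum>\<^sub>\<infinity>d\<in>?SG. (cmod (xi d))\<^sup>2)"
  define V where "V t c = cmod (hconv G (carrier G) H (majorant f t) (\<lambda>e. complex_of_real (fibre_mass t xi e)) c)" for t c
  define N where "N t = real (dcos_deg (inv t))" for t
  define Wt where "Wt t = (\<Sum>\<^sub>\<infinity>c\<in>coset_space G K H. (cmod (majorant f t c))\<^sup>2 * (1 + l (rep c)) powr (2 * s))" for t
  have L: "length_function G (carrier G) H L" unfolding L_def by (rule length_function_extended_length[OF l])
  have W0: "W \<ge> 0" unfolding W_def by (rule infsum_nonneg) simp
  have X20: "X2 \<ge> 0" unfolding X2_def by (rule infsum_nonneg) simp
  have "(\<Sum>c\<in>F. (cmod (hconv G (carrier G) H f xi c))\<^sup>2) \<le> (\<Sum>c\<in>F. (\<Sum>t\<in>R. V t c)\<^sup>2)"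
    unfolding V_def using norm_hconv_le_sum_majorants[OF f] F(2)
    by (intro sum_mono power_mono) auto
  also have "\<dots> \<le> (\<Sum>c\<in>F. (\<Sum>t\<in>R. (V t c)\<^sup>2) * real (card R))"
    by (rule sum_mono) (rule sum_squared_le_sum_of_squares)
  also have "\<dots> = real (card R) * (\<Sum>t\<in>R. \<Sum>c\<in>F. (V t c)\<^sup>2)"
    by (simp add: sum_distrib_left sum_distrib_right sum.swap[of _ F R] mult_ac)
  also have "\<dots> \<le> real (card R) * (\<Sum>t\<in>R. real (card R) * (C\<^sup>2 * Wt t * (N t * X2)))"
    unfolding V_def Wt_def N_def X2_def
    using sum_sq_hconv_fibre_mass_le[OF RD C f R_closed xi F] by (intro mult_left_mono sum_mono) auto
  also have "\<dots> \<le> real (card R) * (\<Sum>t\<in>R. real (card R) * (C\<^sup>2 * (N t * (1 + L (inv t)) powr (2 * s) * W) * (N t * X2)))"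
    unfolding Wt_def W_def N_def
    using weighted_norm_majorant_le[OF l L length_le_extended_length[OF l, folded L_def] s f R_closed] X20
    by (intro mult_left_mono sum_mono mult_right_mono) auto
  also have "\<dots> = C\<^sup>2 * RD_constant L s * W * X2"
    unfolding RD_constant_def N_def
    by (simp add: sum_distrib_left sum_distrib_right power2_eq_square mult_ac)
  finally show ?thesis unfolding L_def W_def X2_def .
qed

lemma RD_inequality_extend:
  "RD_inequality G (carrier G) H (extended_length l) s (C * sqrt (RD_constant (extended_length l) s))"
  unfolding RD_inequality_def
proof (intro ballI allI impI)
  let ?SG = "coset_space G (carrier G) H" and ?K0 = "RD_constant (extended_length l) s"
  fix f xi assume f: "f \<in> hecke_algebra G (carrier G) H" and xi: "in_l2 ?SG xi"
  define W where "W = (\<Sum>\<^sub>\<infinity>c\<in>?SG. (cmod (f c))\<^sup>2 * (1 + extended_length l (rep c)) powr (2 * s))"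
  define X2 where "X2 = (\<Sum>\<^sub>\<infinity>d\<in>?SG. (cmod (xi d))\<^sup>2)"
  have W0: "W \<ge> 0" and X20: "X2 \<ge> 0" unfolding W_def X2_def by (auto intro: infsum_nonneg)
  have K0: "?K0 \<ge> 0"
    using RD_constant_pos[OF length_function_extended_length[OF l]] by (rule less_imp_le)
  have "(\<Sum>\<^sub>\<infinity>c\<in>?SG. (cmod (hconv G (carrier G) H f xi c))\<^sup>2) \<le> C\<^sup>2 * ?K0 * W * X2"
    unfolding W_def X2_def by (rule infsum_le_bound_nonneg) (use sum_sq_hconv_le[OF f xi] in auto)
  then have "l2_norm ?SG (hconv G (carrier G) H f xi) \<le> sqrt (C\<^sup>2 * ?K0 * W * X2)"
    unfolding l2_norm_def by (rule real_sqrt_le_mono)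
  also have "\<dots> = C * sqrt ?K0 * sqrt W * l2_norm ?SG xi"
    unfolding l2_norm_def X2_def[symmetric] using C K0 W0 X20 by (simp add: real_sqrt_mult)
  finally show "l2_norm ?SG (hconv G (carrier G) H f xi) \<le> C * sqrt ?K0 * sqrt W * l2_norm ?SG xi" .
qed

end

lemma property_RD_extend:
  assumes "property_RD G K H"
  shows "property_RD G (carrier G) H"
proof -
  obtain l s C where l: "length_function G K H l" and s: "s > 0" and C: "C > 0"
    and RD: "RD_inequality G K H l s C"
    using assms unfolding property_RD_iff by blast
  have L: "length_function G (carrier G) H (extended_length l)"
    by (rule length_function_extended_length[OF l])
  have "C * sqrt (RD_constant (extended_length l) s) > 0" using C RD_constant_pos[OF L] by simp
  then show ?thesis
    unfolding property_RD_iff using L s RD_inequality_extend[OF l less_imp_le[OF s] RD less_imp_le[OF C]] by blast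
qed

end

theorem proposition3p15:
  fixes Gam :: "('a, 'b) monoid_scheme" and G H :: "'a set"
  assumes "group Gam"
    and "subgroup G Gam"
    and "finite ((\<lambda>x. G #>\<^bsub>Gam\<^esub> x) ` carrier Gam)"
    and "hecke_pair Gam G H"
    and "hecke_pair Gam (carrier Gam) H"
  shows "property_RD Gam G H \<longleftrightarrow> property_RD Gam (carrier Gam) H"
proof -
  interpret hecke_chain Gam H G
    using assms unfolding hecke_pair_def hecke_chain_def hecke_group_def hecke_chain_axioms_def hecke_group_axioms_def
    by blast
  obtain R where "finite R" "R \<subseteq> carrier Gam" "\<one>\<^bsub>Gam\<^esub> \<in> R"
    "\<And>x. x \<in> carrier Gam \<Longrightarrow> \<exists>r\<in>R. x \<otimes>\<^bsub>Gam\<^esub> inv\<^bsub>Gam\<^esub> r \<in> G"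
    using finite_index_transversal[OF assms(2,3)] by blast
  then interpret hecke_transversal Gam H G R
    by unfold_locales auto
  show ?thesis using property_RD_extend property_RD_restrict by blast
qed

end
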